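(* Let $\mathbf f=(f_1,\dots,f_n)\in\mathcal G_0^n$. (1) If $\mathbf f\in\mathcal{LIN}_n$, then the interior $L_{\mathbf f}(\mathcal G_0)^\circ$ (in $\mathbb R^n$) is a convex set containing $0$, and $$L_{\mathbf f}(\mathcal G_0)^\circ=L_{\mathbf f}\big(\{g\in\mathcal G_0:(f_1,\dots,f_n,g)\in\mathcal{LIN}_{n+1}\}\big)^\circ .$$ (2) If $\mathbf f\in\mathcal{LIN}_n^+$, then $L_{\mathbf f}(\mathcal G_{00})^\circ$ is a convex subset of $\mathbb R^n$ containing $0$, and $$L_{\mathbf f}(\mathcal G_0)^\circ=L_{\mathbf f}\big(\{g\in\mathcal G_0:(f_1,\dots,f_n,g)\in\mathcal{LIN}_{n+1}^+\}\big)^\circ .$$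
   Context: Let $\mathcal G$ be the group of strictly increasing continuous maps $f:[-1,1]\to[-1,1]$ with $f(\pm1)=\pm1$, $i$ the identity, $\mathcal G_0=\{f\in\mathcal G:\int_{-1}^1 f=0\}$, $\mathcal G_{00}$ the odd elements of $\mathcal G$. For a continuous $f$ on $[-1,1]$ let $f^e(t)=\tfrac12(f(t)+f(-t))$ (its even part). $\mathcal{LIN}_n$ is the set of $(f_1,\dots,f_n)\in\mathcal G_0^n$ such that $\{i,f_1,\dots,f_n\}$ is linearly independent in $C([-1,1])$; $\mathcal{LIN}_n^+$ is the set of $(f_1,\dots,f_n)\in\mathcal G_0^n$ such that $\{f_1^e,\dots,f_n^e\}$ is linearly independent. For $\mathbf f\in\mathcal G^n$ the linear map $L_{\mathbf f}:C([-1,1])\to\mathbb R^n$ is $L_{\mathbf f}(g)=\big(\int_{-1}^1 g(f_1^{-1}(t))\,dt,\dots,\int_{-1}^1 g(f_n^{-1}(t))\,dt\big)$. *)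

theory Defs
  imports "HOL-Analysis.Analysis"
begin

text \<open>Functions on [-1,1] are represented as real => real; only their values on
  [-1,1] matter.\<close>

definition GG :: "(real \<Rightarrow> real) set" where
  "GG = {f. continuous_on {-1..1} f \<and> strict_mono_on {-1..1} f \<and>
           f (-1) = -1 \<and> f 1 = 1 \<and> f ` {-1..1} \<subseteq> {-1..1}}"

definition GG0 :: "(real \<Rightarrow> real) set" where
  "GG0 = {f \<in> GG. integral {-1..1} f = 0}"

definition GG00 :: "(real \<Rightarrow> real) set" where
  "GG00 = {f \<in> GG. \<forall>t\<in>{-1..1}. f (-t) = - f t}"

definition ident :: "real \<Rightarrow> real" where
  "ident t = t"

definition even_part :: "(real \<Rightarrow> real) \<Rightarrow> real \<Rightarrow> real" where
  "even_part f t = (f t + f (-t)) / 2"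

definition lin_indep_fam :: "('i::finite \<Rightarrow> real \<Rightarrow> real) \<Rightarrow> bool" where
  "lin_indep_fam F \<longleftrightarrow>
     (\<forall>c :: 'i \<Rightarrow> real. (\<forall>t\<in>{-1..1}. (\<Sum>j\<in>UNIV. c j * F j t) = 0) \<longrightarrow> (\<forall>j. c j = 0))"

definition LIN :: "('n::finite \<Rightarrow> real \<Rightarrow> real) \<Rightarrow> bool" where
  "LIN f \<longleftrightarrow> (\<forall>j. f j \<in> GG0) \<and>
     lin_indep_fam (\<lambda>k :: 'n option. case k of None \<Rightarrow> ident | Some j \<Rightarrow> f j)"

definition LINp :: "('n::finite \<Rightarrow> real \<Rightarrow> real) \<Rightarrow> bool" where
  "LINp f \<longleftrightarrow> (\<forall>j. f j \<in> GG0) \<and> lin_indep_fam (\<lambda>j. even_part (f j))"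

text \<open>The (n+1)-tuple (f_1, ..., f_n, g), indexed by 'n option (None = last slot).\<close>
definition ext_tuple :: "('n \<Rightarrow> real \<Rightarrow> real) \<Rightarrow> (real \<Rightarrow> real) \<Rightarrow> 'n option \<Rightarrow> real \<Rightarrow> real" where
  "ext_tuple f g k = (case k of None \<Rightarrow> g | Some j \<Rightarrow> f j)"

definition Lmap :: "('n::finite \<Rightarrow> real \<Rightarrow> real) \<Rightarrow> (real \<Rightarrow> real) \<Rightarrow> real ^ 'n" where
  "Lmap f g = (\<chi> j. integral {-1..1} (\<lambda>t. g (inv_into {-1..1} (f j) t)))"

end

theory Submission
  imports Defs "HOL-Library.Function_Algebras"
begin

text \<open>
  Everything rests on the layer-cake formula: for \<open>f \<in> G\<close> and \<open>a \<in> [-1,1]\<close> the integral of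
  \<open>(f\<^sup>-\<^sup>1(t) - a)\<^sup>+\<close> over \<open>[-1,1]\<close> equals the integral of \<open>1 - f\<close> over \<open>[a,1]\<close>. Hence \<open>L\<^sub>f\<close> sends
  the ramp \<open>s \<mapsto> (s - a)\<^sup>+\<close> to \<open>(1 - a) + \<integral>\<^sub>-\<^sub>1\<^sup>a f\<^sub>j\<close>, and \<open>L\<^sub>f(i) = 0\<close>.

  Perturbations \<open>i + h\<close> of the identity by a Lipschitz \<open>h\<close> with small constant, \<open>h(\<plusminus>1) = 0\<close> and
  mean zero stay in \<open>G\<^sub>0\<close> (in \<open>G\<^sub>0\<^sub>0\<close> if \<open>h\<close> is odd), and \<open>L\<^sub>f\<close> is linear in \<open>h\<close>. A covector
  \<open>c\<close> annihilating \<open>L\<^sub>f\<close> on all such \<open>h\<close> is tested against combinations of ramps: the primitive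
  of \<open>\<Sum> c\<^sub>j f\<^sub>j\<close> is then \<open>(1 - a\<^sup>2)\<close> times a constant (an even function of \<open>a\<close> for odd
  \<open>h\<close>), and differentiating gives a linear relation between \<open>i\<close> and the \<open>f\<^sub>j\<close> (among the even
  parts), so \<open>c = 0\<close>. Thus \<open>L\<^sub>f\<close> is onto from the perturbations, the images of \<open>G\<^sub>0\<close> and
  \<open>G\<^sub>0\<^sub>0\<close> contain a ball around \<open>L\<^sub>f(i) = 0\<close>, and convexity is inherited from \<open>G\<^sub>0\<close> and
  \<open>G\<^sub>0\<^sub>0\<close>.

  Finally, the perturbations in the kernel of \<open>L\<^sub>f\<close> form an infinite-dimensional space, since
  ramps are independent, so one of them, \<open>h\<close>, is not in the finite span of \<open>i, f\<^sub>1, \<dots>, f\<^sub>n\<close>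
  (of the even parts). For \<open>y\<close> in the interior write \<open>(1 + \<sigma>) y = L\<^sub>f(g)\<close>: the two preimages
  \<open>(1 - \<mu>) g + \<mu> i\<close> and \<open>(1 - \<mu>) g + \<mu> (i + \<epsilon> h)\<close> of \<open>y\<close> differ by a multiple of \<open>h\<close>,
  so one of them extends \<open>f\<close> to a tuple in \<open>LIN\<^sub>n\<^sub>+\<^sub>1\<close> (in \<open>LIN\<^sup>+\<^sub>n\<^sub>+\<^sub>1\<close>).
\<close>

section \<open>Increasing homeomorphisms of [-1,1]\<close>

abbreviation ginv :: "(real \<Rightarrow> real) \<Rightarrow> real \<Rightarrow> real" where
  "ginv f \<equiv> inv_into {-1..1} f"

lemma GG_continuous_on: "f \<in> GG \<Longrightarrow> continuous_on {-1..1} f"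
  and GG_strict_mono_on: "f \<in> GG \<Longrightarrow> strict_mono_on {-1..1} f"
  and GG_minus_one: "f \<in> GG \<Longrightarrow> f (-1) = -1"
  and GG_one: "f \<in> GG \<Longrightarrow> f 1 = 1"
  by (auto simp: GG_def)

lemma GG_le_iff: "f \<in> GG \<Longrightarrow> a \<in> {-1..1} \<Longrightarrow> b \<in> {-1..1} \<Longrightarrow> f a \<le> f b \<longleftrightarrow> a \<le> b"
  by (rule strict_mono_on_less_eq[OF GG_strict_mono_on])

lemma GG_mem: "f \<in> GG \<Longrightarrow> a \<in> {-1..1} \<Longrightarrow> f a \<in> {-1..1}"
  by (auto simp: GG_def image_subset_iff)

lemma GGI:
  assumes "continuous_on {-1..1} f" "strict_mono_on {-1..1} f" "f (-1) = -1" "f 1 = 1"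
  shows "f \<in> GG"
proof -
  have "f x \<in> {-1..1}" if "x \<in> {-1..1}" for x
    using strict_mono_on_less_eq[OF assms(2), of "-1" x] strict_mono_on_less_eq[OF assms(2), of x 1]
      that assms(3,4) by auto
  then have "f ` {-1..1} \<subseteq> {-1..1}" by blast
  with assms show ?thesis by (simp add: GG_def)
qed

lemma GG_image: "f \<in> GG \<Longrightarrow> f ` {-1..1} = {-1..1}"
  using IVT'[of f "-1" _ 1] by (fastforce simp: GG_def)

lemma
  assumes "f \<in> GG" "t \<in> {-1..1}"
  shows GG_inv_mem: "ginv f t \<in> {-1..1}" and GG_f_inv: "f (ginv f t) = t"
proof -
  have "t \<in> f ` {-1..1}" using GG_image[OF assms(1)] assms(2) by simp
  then show "ginv f t \<in> {-1..1}" "f (ginv f t) = t" by (rule inv_into_into, rule f_inv_into_f)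
qed

lemma GG_inv_le_iff:
  assumes "f \<in> GG" "t \<in> {-1..1}" "a \<in> {-1..1}"
  shows "ginv f t \<le> a \<longleftrightarrow> t \<le> f a"
  using GG_le_iff[OF assms(1) GG_inv_mem[OF assms(1,2)] assms(3)] GG_f_inv[OF assms(1,2)] by simp

lemma GG_le_inv_iff:
  assumes "f \<in> GG" "t \<in> {-1..1}" "a \<in> {-1..1}"
  shows "a \<le> ginv f t \<longleftrightarrow> f a \<le> t"
  using GG_le_iff[OF assms(1) assms(3) GG_inv_mem[OF assms(1,2)]] GG_f_inv[OF assms(1,2)] by simp

lemma continuous_on_GG_inv:
  assumes "f \<in> GG" shows "continuous_on {-1..1} (ginv f)"
proof -
  have "continuous_on (f ` {-1..1}) (ginv f)"
    using assms strict_mono_on_imp_inj_on[OF GG_strict_mono_on[OF assms]]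
    by (intro continuous_on_inv) (auto simp: GG_continuous_on)
  then show ?thesis using GG_image[OF assms] by simp
qed

lemma continuous_on_comp_GG_inv:
  assumes "f \<in> GG" "continuous_on {-1..1} g"
  shows "continuous_on {-1..1} (\<lambda>t. g (ginv f t))"
  by (rule continuous_on_compose2[OF assms(2) continuous_on_GG_inv[OF assms(1)]])
    (use GG_inv_mem[OF assms(1)] in auto)

lemma GG_convex_comb:
  assumes g: "g \<in> GG" and h: "h \<in> GG" and u: "0 \<le> u" "u \<le> 1"
  shows "(\<lambda>x. (1 - u) * g x + u * h x) \<in> GG"
proof (rule GGI)
  show "strict_mono_on {-1..1} (\<lambda>x. (1 - u) * g x + u * h x)"
  proof (rule strict_mono_onI)
    fix r s :: real assume rs: "r \<in> {-1..1}" "s \<in> {-1..1}" "r < s"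
    then have "g r < g s" "h r < h s"
      using strict_mono_onD[OF GG_strict_mono_on] g h by blast+
    consider "u = 1" | "u < 1" using u by linarith
    then show "(1 - u) * g r + u * h r < (1 - u) * g s + u * h s"
    proof cases
      case 2
      then have "(1 - u) * g r < (1 - u) * g s" using \<open>g r < g s\<close> by simp
      moreover have "u * h r \<le> u * h s" using u \<open>h r < h s\<close> by (simp add: mult_left_mono)
      ultimately show ?thesis by linarith
    qed (use \<open>h r < h s\<close> in simp)
  qed
qed (use g h in \<open>auto intro!: continuous_intros simp: GG_continuous_on GG_minus_one GG_one\<close>)

lemma integral_odd_eq_0:
  fixes h :: "real \<Rightarrow> real"
  assumes "\<And>t. t \<in> {-a..a} \<Longrightarrow> h (-t) = - h t"
  shows "integral {-a..a} h = 0"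
proof -
  have "integral {-a..a} h = integral {-a..a} (\<lambda>t. h (-t))"
    using Henstock_Kurzweil_Integration.integral_reflect_real[where a="-a" and b=a and f=h] by simp
  also have "\<dots> = integral {-a..a} (\<lambda>t. - h t)"
    by (rule Henstock_Kurzweil_Integration.integral_cong) (use assms in auto)
  also have "\<dots> = - integral {-a..a} h"
    by simp
  finally show ?thesis by simp
qed

lemma integral_lincomb:
  fixes g h :: "real \<Rightarrow> real"
  assumes "continuous_on {a..b} g" "continuous_on {a..b} h"
  shows "integral {a..b} (\<lambda>x. c * g x + d * h x) = c * integral {a..b} g + d * integral {a..b} h"
  using assms by (subst integral_add) (auto intro!: integrable_continuous_interval continuous_intros)

lemma GG0_convex_comb:
  "g \<in> GG0 \<Longrightarrow> h \<in> GG0 \<Longrightarrow> 0 \<le> u \<Longrightarrow> u \<le> 1 \<Longrightarrow> (\<lambda>x. (1 - u) * g x + u * h x) \<in> GG0"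
  by (auto simp: GG0_def GG_convex_comb GG_continuous_on integral_lincomb)

lemma GG00_convex_comb:
  "g \<in> GG00 \<Longrightarrow> h \<in> GG00 \<Longrightarrow> 0 \<le> u \<Longrightarrow> u \<le> 1 \<Longrightarrow> (\<lambda>x. (1 - u) * g x + u * h x) \<in> GG00"
  unfolding GG00_def using GG_convex_comb[of g h u] by (auto simp: algebra_simps)

section \<open>The layer-cake formula\<close>

lemma integral_le_step:
  fixes D :: "real \<Rightarrow> real"
  assumes D: "continuous_on {lo..hi} D" and c: "lo \<le> c" "c \<le> hi"
    and "\<And>t. t \<in> {lo..c} \<Longrightarrow> D t \<le> 0" "\<And>t. t \<in> {c..hi} \<Longrightarrow> D t \<le> K"
  shows "integral {lo..hi} D \<le> K * (hi - c)"
proof -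
  have int: "D integrable_on {lo..c}" "D integrable_on {c..hi}"
    using c by (auto intro!: integrable_continuous_interval continuous_on_subset[OF D])
  have "integral {lo..c} D \<le> integral {lo..c} (\<lambda>_. 0)"
    using assms(4) by (intro integral_le int) auto
  moreover have "integral {c..hi} D \<le> integral {c..hi} (\<lambda>_. K)"
    using assms(5) by (intro integral_le int) auto
  moreover have "integral {lo..c} D + integral {c..hi} D = integral {lo..hi} D"
    using c by (intro Henstock_Kurzweil_Integration.integral_combine integrable_continuous_interval D)
  ultimately show ?thesis using c by (simp add: mult.commute)
qed

lemma integral_ge_step:
  fixes D :: "real \<Rightarrow> real"
  assumes "continuous_on {lo..hi} D" "lo \<le> c" "c \<le> hi"
    and "\<And>t. t \<in> {lo..c} \<Longrightarrow> 0 \<le> D t" "\<And>t. t \<in> {c..hi} \<Longrightarrow> K \<le> D t"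
  shows "K * (hi - c) \<le> integral {lo..hi} D"
  using integral_le_step[of lo hi "\<lambda>t. - D t" c "- K"] assms
  by (auto intro: continuous_intros)

lemma constant_on_if_increments_bounded:
  fixes Q w :: "real \<Rightarrow> real"
  assumes "convex S" "continuous_on S w"
    and bound: "\<And>x y. x \<in> S \<Longrightarrow> y \<in> S \<Longrightarrow> \<bar>Q y - Q x\<bar> \<le> \<bar>y - x\<bar> * \<bar>w y - w x\<bar>"
  shows "\<exists>c. \<forall>x\<in>S. Q x = c"
proof -
  have "(Q has_field_derivative 0) (at x within S)" if x: "x \<in> S" for x
  proof -
    have "((\<lambda>y. w y - w x) \<longlongrightarrow> 0) (at x within S)"
      using assms(2) x by (simp add: continuous_on_def LIM_zero)
    then have lim: "((\<lambda>y. \<bar>w y - w x\<bar>) \<longlongrightarrow> 0) (at x within S)"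
      by (rule tendsto_rabs_zero)
    have "\<forall>\<^sub>F y in at x within S. norm ((Q y - Q x) / (y - x)) \<le> \<bar>w y - w x\<bar>"
      unfolding eventually_at_filter
      by (intro always_eventually allI impI)
        (simp add: abs_divide divide_le_eq mult.commute bound x)
    then show ?thesis
      unfolding has_field_derivative_iff by (rule Lim_null_comparison[OF _ lim])
  qed
  then show ?thesis
    using has_field_derivative_zero_constant[OF assms(1)] by blast
qed

lemma integral_inv_excess_increment_bounds:
  assumes f: "f \<in> GG" and ab: "-1 \<le> a" "a \<le> b" "b \<le> 1"
  defines "E c \<equiv> integral {-1..1} (\<lambda>t. max 0 (ginv f t - c))"
  shows "(b - a) * (1 - f b) \<le> E a - E b" "E a - E b \<le> (b - a) * (1 - f a)"
proof -
  define D where "D t = max 0 (ginv f t - a) - max 0 (ginv f t - b)" for t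
  have cont: "continuous_on {-1..1} (\<lambda>t. max 0 (ginv f t - c))" for c
    by (intro continuous_intros continuous_on_GG_inv f)
  have "E a - E b = integral {-1..1} D"
    unfolding E_def D_def
    by (rule integral_diff[symmetric]) (auto intro: integrable_continuous_interval cont)
  moreover have "f a \<in> {-1..1}" "f b \<in> {-1..1}"
    using GG_mem[OF f] ab by auto
  moreover have "integral {-1..1} D \<le> (b - a) * (1 - f a)"
  proof (rule integral_le_step)
    show "D t \<le> 0" if "t \<in> {-1..f a}" for t
      using that GG_inv_le_iff[OF f, of t a] \<open>f a \<in> {-1..1}\<close> ab by (auto simp: D_def)
  qed (use \<open>f a \<in> {-1..1}\<close> ab in \<open>auto simp: D_def intro!: continuous_intros cont\<close>)
  moreover have "(b - a) * (1 - f b) \<le> integral {-1..1} D"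
  proof (rule integral_ge_step)
    show "b - a \<le> D t" if "t \<in> {f b..1}" for t
      using that GG_le_inv_iff[OF f, of t b] \<open>f b \<in> {-1..1}\<close> ab by (auto simp: D_def)
  qed (use \<open>f b \<in> {-1..1}\<close> ab in \<open>auto simp: D_def intro!: continuous_intros cont\<close>)
  ultimately show "(b - a) * (1 - f b) \<le> E a - E b" "E a - E b \<le> (b - a) * (1 - f a)"
    by simp_all
qed

lemma integral_complement_bounds:
  assumes f: "f \<in> GG" and ab: "-1 \<le> a" "a \<le> b" "b \<le> 1"
  shows "(b - a) * (1 - f b) \<le> integral {a..b} (\<lambda>s. 1 - f s)"
    "integral {a..b} (\<lambda>s. 1 - f s) \<le> (b - a) * (1 - f a)"
proof -
  have int: "(\<lambda>s. 1 - f s) integrable_on {a..b}"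
    using ab by (intro integrable_continuous_interval continuous_intros
        continuous_on_subset[OF GG_continuous_on[OF f]]) auto
  have mono: "f a \<le> f s" "f s \<le> f b" if "s \<in> {a..b}" for s
    using that ab GG_le_iff[OF f] by auto
  have "integral {a..b} (\<lambda>_. 1 - f b) \<le> integral {a..b} (\<lambda>s. 1 - f s)"
    using mono by (intro integral_le int) auto
  then show "(b - a) * (1 - f b) \<le> integral {a..b} (\<lambda>s. 1 - f s)"
    using ab by (simp add: mult.commute)
  have "integral {a..b} (\<lambda>s. 1 - f s) \<le> integral {a..b} (\<lambda>_. 1 - f a)"
    using mono by (intro integral_le int) auto
  then show "integral {a..b} (\<lambda>s. 1 - f s) \<le> (b - a) * (1 - f a)"
    using ab by (simp add: mult.commute)
qed

text \<open>Both sides have increments between \<open>(b - a)(1 - f b)\<close> and \<open>(b - a)(1 - f a)\<close> as \<open>a\<close>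
  moves to \<open>b\<close>, so their difference has zero derivative.\<close>

theorem layer_cake_GG:
  assumes f: "f \<in> GG" and a: "a \<in> {-1..1}"
  shows "integral {-1..1} (\<lambda>t. max 0 (ginv f t - a)) = integral {a..1} (\<lambda>s. 1 - f s)"
proof -
  define E where "E c = integral {-1..1} (\<lambda>t. max 0 (ginv f t - c))" for c
  define I where "I c = integral {c..1} (\<lambda>s. 1 - f s)" for c
  have I_diff: "I x - I y = integral {x..y} (\<lambda>s. 1 - f s)" if "-1 \<le> x" "x \<le> y" "y \<le> 1" for x y
    using Henstock_Kurzweil_Integration.integral_combine[of x y 1 "\<lambda>s. 1 - f s"] that unfolding I_def
    by (simp add: integrable_continuous_interval continuous_intros
        continuous_on_subset[OF GG_continuous_on[OF f]])
  have ordered: "\<bar>(E y - I y) - (E x - I x)\<bar> \<le> \<bar>y - x\<bar> * \<bar>f y - f x\<bar>"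
    if "-1 \<le> x" "x \<le> y" "y \<le> 1" for x y
    using integral_inv_excess_increment_bounds[OF f that] integral_complement_bounds[OF f that]
      GG_le_iff[OF f, of x y] that
    unfolding E_def[symmetric] I_diff[OF that, symmetric] by (simp add: abs_le_iff algebra_simps)
  have "\<bar>(E y - I y) - (E x - I x)\<bar> \<le> \<bar>y - x\<bar> * \<bar>f y - f x\<bar>" if "x \<in> {-1..1}" "y \<in> {-1..1}" for x y
    using ordered[of x y] ordered[of y x] that by (cases "x \<le> y") (auto simp: abs_minus_commute)
  then obtain c where c: "\<forall>x\<in>{-1..1}. E x - I x = c"
    using constant_on_if_increments_bounded[of "{-1..1}" f "\<lambda>x. E x - I x"]
      GG_continuous_on[OF f] by auto
  have "E 1 = integral {-1..1} (\<lambda>_::real. 0)"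
    unfolding E_def by (rule Henstock_Kurzweil_Integration.integral_cong) (use GG_inv_mem[OF f] in auto)
  moreover have "I 1 = 0"
    by (simp add: I_def)
  ultimately have "E a - I a = 0"
    using c[rule_format, of 1] c[rule_format, OF a] by simp
  then show ?thesis by (simp add: E_def I_def)
qed

section \<open>The linear map L on ramps\<close>

lemma integrable_comp_GG_inv:
  fixes g :: "real \<Rightarrow> real"
  assumes "f \<in> GG" "continuous_on {-1..1} g"
  shows "(\<lambda>t. g (ginv f t)) integrable_on {-1..1}"
  by (rule integrable_continuous_interval) (rule continuous_on_comp_GG_inv[OF assms])

lemma Lmap_add:
  assumes "\<forall>j. f j \<in> GG" "continuous_on {-1..1} g" "continuous_on {-1..1} h"
  shows "Lmap f (\<lambda>s. g s + h s) = Lmap f g + Lmap f h"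
  using assms by (simp add: Lmap_def vec_eq_iff integral_add integrable_comp_GG_inv)

lemma Lmap_diff:
  assumes "\<forall>j. f j \<in> GG" "continuous_on {-1..1} g" "continuous_on {-1..1} h"
  shows "Lmap f (\<lambda>s. g s - h s) = Lmap f g - Lmap f h"
  using assms by (simp add: Lmap_def vec_eq_iff integral_diff integrable_comp_GG_inv)

lemma Lmap_scale: "Lmap f (\<lambda>s. c * g s) = c *\<^sub>R Lmap f g"
  by (simp add: Lmap_def vec_eq_iff)

lemma Lmap_lincomb:
  assumes "\<forall>j. f j \<in> GG" "continuous_on {-1..1} g" "continuous_on {-1..1} h"
  shows "Lmap f (\<lambda>s. x * g s + y * h s) = x *\<^sub>R Lmap f g + y *\<^sub>R Lmap f h"
  using assms by (simp add: Lmap_add Lmap_scale continuous_intros)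

lemma Lmap_sum:
  assumes "\<forall>j. f j \<in> GG" "\<And>k. k \<in> K \<Longrightarrow> continuous_on {-1..1} (g k)"
  shows "Lmap f (\<lambda>s. \<Sum>k\<in>K. w k * g k s) = (\<Sum>k\<in>K. w k *\<^sub>R Lmap f (g k))"
proof (cases "finite K")
  case True
  have "integral {-1..1} (\<lambda>t. \<Sum>k\<in>K. w k * g k (ginv (f j) t)) =
        (\<Sum>k\<in>K. w k * integral {-1..1} (\<lambda>t. g k (ginv (f j) t)))" for j
    using True assms
    by (subst integral_sum) (auto intro!: integrable_continuous_interval continuous_intros
        continuous_on_comp_GG_inv)
  then show ?thesis by (simp add: Lmap_def vec_eq_iff)
qed (simp add: Lmap_def vec_eq_iff)

lemma Lmap_const: "Lmap f (\<lambda>_. c) = (2 * c) *\<^sub>R 1"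
  by (simp add: Lmap_def vec_eq_iff)

lemma integral_GG0_inv:
  assumes f: "f \<in> GG0"
  shows "integral {-1..1} (ginv f) = 0"
proof -
  have fG: "f \<in> GG" using f by (simp add: GG0_def)
  have "integral {-1..1} (\<lambda>t. ginv f t + 1) = integral {-1..1} (\<lambda>t. max 0 (ginv f t - (-1)))"
  proof (rule Henstock_Kurzweil_Integration.integral_cong)
    fix t :: real assume "t \<in> {-1..1}"
    then have "-1 \<le> ginv f t" using GG_inv_mem[OF fG] by simp
    then show "ginv f t + 1 = max 0 (ginv f t - (-1))" by simp
  qed
  also have "\<dots> = integral {-1..1} (\<lambda>s. 1 - f s)"
    using layer_cake_GG[OF fG, of "-1"] by simp
  also have "\<dots> = 2"
    using f by (simp add: GG0_def integral_diff integrable_continuous_interval GG_continuous_on)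
  finally show ?thesis
    by (simp add: integral_add integrable_continuous_interval continuous_on_GG_inv[OF fG])
qed

lemma Lmap_ident: "\<forall>j. f j \<in> GG0 \<Longrightarrow> Lmap f (\<lambda>s. s) = 0"
  by (simp add: Lmap_def vec_eq_iff integral_GG0_inv)

definition primitives :: "('n::finite \<Rightarrow> real \<Rightarrow> real) \<Rightarrow> real \<Rightarrow> real ^ 'n" where
  "primitives f a = (\<chi> j. integral {-1..a} (f j))"

lemma primitives_minus_one [simp]: "primitives f (-1) = 0"
  by (simp add: primitives_def vec_eq_iff)

lemma inner_primitives:
  assumes "\<forall>j. f j \<in> GG" "a \<in> {-1..1}"
  shows "c \<bullet> primitives f a = integral {-1..a} (\<lambda>s. \<Sum>j\<in>UNIV. c$j * f j s)"
proof -
  have "continuous_on {-1..a} (f j)" for j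
    using assms by (auto intro: continuous_on_subset[OF GG_continuous_on])
  then show ?thesis
    unfolding primitives_def inner_vec_def
    by (subst integral_sum) (auto intro!: integrable_continuous_interval continuous_intros)
qed

definition ramp :: "real \<Rightarrow> real \<Rightarrow> real" where
  "ramp a s = max 0 (s - a)"

lemma continuous_on_ramp [continuous_intros]: "continuous_on S (ramp a)"
  unfolding ramp_def by (intro continuous_intros)

lemma lipschitz_on_ramp: "1-lipschitz_on S (ramp a)"
  by (rule lipschitz_onI) (auto simp: ramp_def dist_real_def max_def abs_if)

lemma integral_ramp:
  assumes a: "a \<in> {-1..1}"
  shows "integral {-1..1} (ramp a) = (1 - a)^2 / 2"
proof -
  have "integral {-1..a} (ramp a) = integral {-1..a} (\<lambda>_::real. 0)"
    by (rule Henstock_Kurzweil_Integration.integral_cong) (auto simp: ramp_def)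
  moreover have "integral {a..1} (ramp a) = integral {a..1} (\<lambda>s. s - a)"
    by (rule Henstock_Kurzweil_Integration.integral_cong) (auto simp: ramp_def)
  moreover have "((\<lambda>s. s - a) has_integral (1 - a)^2 / 2) {a..1}"
  proof -
    have "((\<lambda>s. (s - a)^2 / 2) has_real_derivative x - a) (at x within {a..1})" for x
      by (auto intro!: derivative_eq_intros)
    then show ?thesis
      using fundamental_theorem_of_calculus[of a 1 "\<lambda>s. (s - a)^2 / 2" "\<lambda>s. s - a"] a
      by (simp add: has_real_derivative_iff_has_vector_derivative)
  qed
  ultimately show ?thesis
    using Henstock_Kurzweil_Integration.integral_combine[of "-1" a 1 "ramp a"] a
    by (simp add: integral_unique integrable_continuous_interval continuous_on_ramp)
qed

lemma Lmap_ramp: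
  assumes f: "\<forall>j. f j \<in> GG0" and a: "a \<in> {-1..1}"
  shows "Lmap f (ramp a) = (1 - a) *\<^sub>R 1 + primitives f a"
proof -
  have "integral {-1..1} (\<lambda>t. ramp a (ginv (f j) t)) = (1 - a) + integral {-1..a} (f j)" for j
  proof -
    have fG: "f j \<in> GG" and f0: "integral {-1..1} (f j) = 0"
      using f by (simp_all add: GG0_def)
    have int: "f j integrable_on {-1..1}" "f j integrable_on {a..1}"
      using a by (auto intro!: integrable_continuous_interval
          continuous_on_subset[OF GG_continuous_on[OF fG]])
    have "integral {-1..1} (\<lambda>t. ramp a (ginv (f j) t)) = integral {a..1} (\<lambda>s. 1 - f j s)"
      using layer_cake_GG[OF fG a] by (simp add: ramp_def)
    also have "\<dots> = (1 - a) - integral {a..1} (f j)"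
      using a int by (subst integral_diff) auto
    also have "integral {-1..a} (f j) + integral {a..1} (f j) = 0"
      using Henstock_Kurzweil_Integration.integral_combine[OF _ _ int(1), of a] a f0 by simp
    ultimately show ?thesis by linarith
  qed
  then show ?thesis by (simp add: Lmap_def primitives_def vec_eq_iff)
qed

definition odd_ramp :: "real \<Rightarrow> real \<Rightarrow> real" where
  "odd_ramp a s = ramp a s - ramp a (-s)"

lemma odd_ramp_eq: "odd_ramp a = (\<lambda>s. ramp a s - ramp (-a) s + (s + a))"
  by (simp add: fun_eq_iff odd_ramp_def ramp_def max_def)

lemma continuous_on_odd_ramp [continuous_intros]: "continuous_on S (odd_ramp a)"
  unfolding odd_ramp_def by (intro continuous_intros continuous_on_compose2[OF continuous_on_ramp]) auto

lemma lipschitz_on_odd_ramp: "2-lipschitz_on S (odd_ramp a)"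
proof (rule lipschitz_onI)
  fix x y
  have "\<bar>ramp a x - ramp a y\<bar> \<le> \<bar>x - y\<bar>" "\<bar>ramp a (-x) - ramp a (-y)\<bar> \<le> \<bar>x - y\<bar>"
    using lipschitz_onD[OF lipschitz_on_ramp[of UNIV a], of x y]
      lipschitz_onD[OF lipschitz_on_ramp[of UNIV a], of "-x" "-y"] by (auto simp: dist_real_def)
  then show "dist (odd_ramp a x) (odd_ramp a y) \<le> 2 * dist x y"
    by (auto simp: odd_ramp_def dist_real_def abs_le_iff)
qed simp

lemma Lmap_odd_ramp:
  assumes f: "\<forall>j. f j \<in> GG0" and a: "a \<in> {-1..1}"
  shows "Lmap f (odd_ramp a) = primitives f a - primitives f (-a)"
proof -
  have fG: "\<forall>j. f j \<in> GG" using f by (simp add: GG0_def)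
  have "Lmap f (odd_ramp a) = Lmap f (\<lambda>s. (ramp a s - ramp (-a) s) + (s + a))"
    by (simp add: odd_ramp_eq)
  also have "\<dots> = (Lmap f (ramp a) - Lmap f (ramp (-a))) + (Lmap f (\<lambda>s. s) + Lmap f (\<lambda>_. a))"
    using fG by (simp add: Lmap_add Lmap_diff continuous_intros)
  also have "\<dots> = primitives f a - primitives f (-a)"
    using a by (simp add: Lmap_ramp[OF f] Lmap_ident[OF f] Lmap_const vec_eq_iff algebra_simps)
  finally show ?thesis .
qed

section \<open>Admissible perturbations of the identity\<close>

lemma lipschitz_on_sum:
  fixes f :: "'k \<Rightarrow> 'a::metric_space \<Rightarrow> 'b::real_normed_vector"
  assumes "finite K" "\<And>k. k \<in> K \<Longrightarrow> (C k)-lipschitz_on U (f k)"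
  shows "(\<Sum>k\<in>K. C k)-lipschitz_on U (\<lambda>x. \<Sum>k\<in>K. f k x)"
  using assms
proof (induction K rule: finite_induct)
  case empty
  then show ?case using lipschitz_on_constant[of U 0] by simp
next
  case (insert k K)
  then show ?case by (simp add: lipschitz_on_add)
qed

definition admissible :: "(real \<Rightarrow> real) \<Rightarrow> bool" where
  "admissible h \<longleftrightarrow>
     (\<exists>C. C-lipschitz_on {-1..1} h) \<and> h (-1) = 0 \<and> h 1 = 0 \<and> integral {-1..1} h = 0"

lemma admissible_continuous_on: "admissible h \<Longrightarrow> continuous_on {-1..1} h"
  unfolding admissible_def using lipschitz_on_continuous_on by blast

lemma admissible_lincomb:
  assumes g: "admissible g" and h: "admissible h"
  shows "admissible (\<lambda>s. x * g s + y * h s)"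
proof -
  obtain C D where "C-lipschitz_on {-1..1} g" "D-lipschitz_on {-1..1} h"
    using g h by (auto simp: admissible_def)
  then have "(\<bar>x\<bar> * C + \<bar>y\<bar> * D)-lipschitz_on {-1..1} (\<lambda>s. x * g s + y * h s)"
    by (intro lipschitz_on_add lipschitz_on_cmult_real)
  then show ?thesis
    using g h by (auto simp: admissible_def integral_lincomb admissible_continuous_on)
qed

lemma admissible_zero: "admissible (\<lambda>_. 0)"
  unfolding admissible_def using lipschitz_on_constant by auto

lemma admissible_sum:
  "finite K \<Longrightarrow> (\<And>k. k \<in> K \<Longrightarrow> admissible (g k)) \<Longrightarrow> admissible (\<lambda>s. \<Sum>k\<in>K. w k * g k s)"
proof (induction K rule: finite_induct)
  case (insert k K)
  then show ?case using admissible_lincomb[of "g k" _ "w k" 1] by simp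
qed (simp add: admissible_zero)

lemma ident_plus_contraction_GG0:
  assumes h: "admissible h" and C: "C-lipschitz_on {-1..1} h" "C < 1"
  shows "(\<lambda>s. s + h s) \<in> GG0"
proof -
  have "strict_mono_on {-1..1} (\<lambda>s. s + h s)"
  proof (rule strict_mono_onI)
    fix r s :: real assume rs: "r \<in> {-1..1}" "s \<in> {-1..1}" "r < s"
    have "h r - h s \<le> C * (s - r)"
      using lipschitz_onD[OF C(1) rs(1,2)] rs(3) by (simp add: dist_real_def abs_le_iff)
    also have "\<dots> < s - r"
      using C(2) rs(3) by simp
    finally show "r + h r < s + h s" by simp
  qed
  moreover have "integral {-1..1} (\<lambda>s. s + h s) = 0"
    using integral_odd_eq_0[of 1 "\<lambda>s. s"] h
    by (simp add: admissible_def integral_add integrable_continuous_interval admissible_continuous_on)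
  moreover have "(\<lambda>s. s + h s) (-1) = -1" "(\<lambda>s. s + h s) 1 = 1"
    using h by (simp_all add: admissible_def)
  moreover have "continuous_on {-1..1} (\<lambda>s. s + h s)"
    using admissible_continuous_on[OF h] by (intro continuous_intros)
  ultimately show ?thesis
    unfolding GG0_def using GGI by blast
qed

lemma ident_GG0: "(\<lambda>s. s) \<in> GG0"
  using ident_plus_contraction_GG0[OF admissible_zero lipschitz_on_constant] by simp

lemma Lmap_ident_plus_comb:
  fixes f hk :: "'n::finite \<Rightarrow> real \<Rightarrow> real"
  assumes f: "\<forall>j. f j \<in> GG0"
    and hk: "\<And>k. admissible (hk k)" "\<And>k. Lmap f (hk k) = axis k 1"
  shows "Lmap f (\<lambda>s. s + (\<Sum>k\<in>UNIV. t$k * hk k s)) = t"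
proof -
  have fG: "\<forall>j. f j \<in> GG" using f by (simp add: GG0_def)
  have cont: "continuous_on {-1..1} (\<lambda>s. \<Sum>k\<in>UNIV. t$k * hk k s)"
    using admissible_continuous_on[OF hk(1)] by (intro continuous_intros)
  have "Lmap f (\<lambda>s. s + (\<Sum>k\<in>UNIV. t$k * hk k s)) = Lmap f (\<lambda>s. s) + Lmap f (\<lambda>s. \<Sum>k\<in>UNIV. t$k * hk k s)"
    by (rule Lmap_add[OF fG continuous_on_id cont])
  also have "\<dots> = (\<Sum>k\<in>UNIV. t$k *\<^sub>R Lmap f (hk k))"
    using Lmap_sum[OF fG, of UNIV hk "\<lambda>k. t$k"] admissible_continuous_on[OF hk(1)]
    by (simp add: Lmap_ident f)
  also have "\<dots> = t"
    using basis_expansion[of t] by (simp add: hk(2) scalar_mult_eq_scaleR)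
  finally show ?thesis .
qed

lemma ident_plus_small_comb_GG0:
  fixes hk :: "'n::finite \<Rightarrow> real \<Rightarrow> real"
  assumes hk: "\<And>k. admissible (hk k)"
  shows "\<exists>\<delta>>0. \<forall>t. norm t < \<delta> \<longrightarrow> (\<lambda>s. s + (\<Sum>k\<in>UNIV. t$k * hk k s)) \<in> GG0"
proof -
  obtain C where C: "\<And>k. (C k)-lipschitz_on {-1..1} (hk k)"
    using hk unfolding admissible_def by metis
  have C0: "0 \<le> (\<Sum>k\<in>UNIV. C k)"
    using lipschitz_on_nonneg[OF C] by (simp add: sum_nonneg)
  have "(\<lambda>s. s + (\<Sum>k\<in>UNIV. t$k * hk k s)) \<in> GG0" if t: "norm t * ((\<Sum>k\<in>UNIV. C k) + 1) < 1" for t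
  proof -
    have lip: "(\<Sum>k\<in>UNIV. \<bar>t$k\<bar> * C k)-lipschitz_on {-1..1} (\<lambda>s. \<Sum>k\<in>UNIV. t$k * hk k s)"
      using lipschitz_on_cmult_real[OF C] by (intro lipschitz_on_sum) auto
    have "(\<Sum>k\<in>UNIV. \<bar>t$k\<bar> * C k) \<le> norm t * (\<Sum>k\<in>UNIV. C k)"
      unfolding sum_distrib_left
      using component_le_norm_cart lipschitz_on_nonneg[OF C] by (intro sum_mono mult_right_mono)
    also have "\<dots> < 1"
      using t norm_ge_zero[of t] unfolding distrib_left by linarith
    finally show ?thesis
      using hk by (intro ident_plus_contraction_GG0[OF admissible_sum lipschitz_on_le[OF lip]]) auto
  qed
  moreover have "norm t < 1 / ((\<Sum>k\<in>UNIV. C k) + 1) \<longleftrightarrow> norm t * ((\<Sum>k\<in>UNIV. C k) + 1) < 1"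
    for t :: "real ^ 'n"
    using C0 by (simp add: less_divide_eq)
  ultimately show ?thesis
    using C0 by (intro exI[of _ "1 / ((\<Sum>k\<in>UNIV. C k) + 1)"]) simp
qed

lemma zero_in_interior_Lmap_image:
  fixes f hk :: "'n::finite \<Rightarrow> real \<Rightarrow> real"
  assumes f: "\<forall>j. f j \<in> GG0"
    and hk: "\<And>k. admissible (hk k)" "\<And>k. Lmap f (hk k) = axis k 1"
    and T: "\<And>t. (\<lambda>s. s + (\<Sum>k\<in>UNIV. t$k * hk k s)) \<in> GG0 \<Longrightarrow> (\<lambda>s. s + (\<Sum>k\<in>UNIV. t$k * hk k s)) \<in> T"
  shows "0 \<in> interior (Lmap f ` T)"
proof -
  obtain \<delta> where "\<delta> > 0" and small: "\<forall>t. norm t < \<delta> \<longrightarrow> (\<lambda>s. s + (\<Sum>k\<in>UNIV. t$k * hk k s)) \<in> GG0"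
    using ident_plus_small_comb_GG0[of hk, OF hk(1)] by blast
  have "ball 0 \<delta> \<subseteq> Lmap f ` T"
  proof
    fix t :: "real ^ 'n" assume "t \<in> ball 0 \<delta>"
    then have "(\<lambda>s. s + (\<Sum>k\<in>UNIV. t$k * hk k s)) \<in> T"
      using T small by simp
    then show "t \<in> Lmap f ` T"
      by (rule rev_image_eqI) (simp add: Lmap_ident_plus_comb[OF f hk])
  qed
  then show ?thesis
    using \<open>\<delta> > 0\<close> mem_interior by blast
qed

section \<open>Nondegeneracy of L\<close>

lemma subspace_eq_UNIV_if_no_annihilator:
  fixes S :: "'a::euclidean_space set"
  assumes "subspace S" "\<And>c. c \<noteq> 0 \<Longrightarrow> \<exists>x\<in>S. c \<bullet> x \<noteq> 0"
  shows "S = UNIV"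
proof (rule ccontr)
  assume "S \<noteq> UNIV"
  then have "span S \<noteq> UNIV"
    using assms(1) span_eq_iff by metis
  then obtain c where "c \<noteq> 0" "span S \<subseteq> {x. c \<bullet> x = 0}"
    using span_not_univ_subset_hyperplane by blast
  then show False
    using assms(2) span_base by blast
qed

lemma subspace_Lmap_image:
  assumes f: "\<forall>j. f j \<in> GG"
    and A: "\<And>h. h \<in> A \<Longrightarrow> continuous_on {-1..1} h" "(\<lambda>_. 0) \<in> A"
      "\<And>g h x y. g \<in> A \<Longrightarrow> h \<in> A \<Longrightarrow> (\<lambda>s. x * g s + y * h s) \<in> A"
  shows "subspace (Lmap f ` A)"
proof -
  have lincomb: "x *\<^sub>R Lmap f g + y *\<^sub>R Lmap f h \<in> Lmap f ` A" if "g \<in> A" "h \<in> A" for g h x y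
    by (rule rev_image_eqI[OF A(3)[OF that]])
      (rule Lmap_lincomb[OF f A(1)[OF that(1)] A(1)[OF that(2)], symmetric])
  have "0 \<in> Lmap f ` A"
    using lincomb[OF A(2) A(2), of 0 0] by simp
  moreover have "x + y \<in> Lmap f ` A" if xy: "x \<in> Lmap f ` A" "y \<in> Lmap f ` A" for x y
  proof -
    obtain g h where "g \<in> A" "h \<in> A" "x = Lmap f g" "y = Lmap f h"
      using xy by blast
    then show ?thesis using lincomb[of g h 1 1] by simp
  qed
  moreover have "c *\<^sub>R x \<in> Lmap f ` A" if x: "x \<in> Lmap f ` A" for c x
  proof -
    obtain g where "g \<in> A" "x = Lmap f g"
      using x by blast
    then show ?thesis using lincomb[of g g c 0] by simp
  qed
  ultimately show ?thesis
    by (simp add: subspace_def)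
qed

lemma Lmap_basis_preimages:
  fixes f :: "'n::finite \<Rightarrow> real \<Rightarrow> real"
  assumes f: "\<forall>j. f j \<in> GG"
    and A: "\<And>h. h \<in> A \<Longrightarrow> continuous_on {-1..1} h" "(\<lambda>_. 0) \<in> A"
      "\<And>g h x y. g \<in> A \<Longrightarrow> h \<in> A \<Longrightarrow> (\<lambda>s. x * g s + y * h s) \<in> A"
    and no_annihilator: "\<And>c. c \<noteq> 0 \<Longrightarrow> \<exists>h\<in>A. c \<bullet> Lmap f h \<noteq> 0"
  obtains hk where "\<And>k. hk k \<in> A" "\<And>k. Lmap f (hk k) = axis k 1"
proof -
  have "Lmap f ` A = UNIV"
    using no_annihilator by (intro subspace_eq_UNIV_if_no_annihilator subspace_Lmap_image f A) auto
  then have "\<forall>k. \<exists>h. h \<in> A \<and> Lmap f h = axis k 1"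
    by (metis UNIV_I imageE)
  then show ?thesis
    using that by metis
qed

lemma continuous_eq_derivative_of_integral:
  fixes g F :: "real \<Rightarrow> real"
  assumes g: "continuous_on {a..b} g" and ab: "a < b" and x: "x \<in> {a..b}"
    and F: "\<And>y. y \<in> {a..b} \<Longrightarrow> integral {a..y} g = F y"
    and D: "(F has_real_derivative D) (at x within {a..b})"
  shows "g x = D"
proof -
  have "(F has_vector_derivative g x) (at x within {a..b})"
    by (rule has_vector_derivative_transform[OF x _ integral_has_vector_derivative[OF g x]])
      (simp add: F)
  moreover have "(F has_vector_derivative D) (at x within {a..b})"
    using D by (simp add: has_real_derivative_iff_has_vector_derivative)
  ultimately show ?thesis
    using vector_derivative_unique_within_closed_interval[OF ab] x by simp
qed

lemma sum_UNIV_option: "(\<Sum>k\<in>UNIV. G k) = G None + (\<Sum>j\<in>UNIV. G (Some j))"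
  for G :: "'n::finite option \<Rightarrow> 'a::comm_monoid_add"
  by (simp add: UNIV_option_conv sum.reindex)

text \<open>The coefficients make the test function vanish at \<open>\<plusminus>1\<close> and have mean zero.\<close>
definition test_ramp :: "real \<Rightarrow> real \<Rightarrow> real" where
  "test_ramp a s = ramp a s + (a * (1 - a) / 2 * ramp (-1) s + (a\<^sup>2 - 1) * ramp 0 s)"

lemma admissible_test_ramp:
  assumes a: "a \<in> {-1..1}"
  shows "admissible (test_ramp a)"
  unfolding admissible_def
proof (intro conjI)
  have "(1 + (\<bar>a * (1 - a) / 2\<bar> * 1 + \<bar>a\<^sup>2 - 1\<bar> * 1))-lipschitz_on {-1..1} (test_ramp a)"
    unfolding test_ramp_def by (intro lipschitz_on_add lipschitz_on_cmult_real lipschitz_on_ramp)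
  then show "\<exists>C. C-lipschitz_on {-1..1} (test_ramp a)" ..
  show "test_ramp a (-1) = 0" "test_ramp a 1 = 0"
    using a by (auto simp: test_ramp_def ramp_def power2_eq_square field_simps)
  have "integral {-1..1} (test_ramp a) = integral {-1..1} (ramp a)
      + (a * (1 - a) / 2 * integral {-1..1} (ramp (-1)) + (a\<^sup>2 - 1) * integral {-1..1} (ramp 0))"
    unfolding test_ramp_def
    by (simp add: integral_add integral_lincomb integrable_continuous_interval continuous_intros)
  then show "integral {-1..1} (test_ramp a) = 0"
    using a by (simp add: integral_ramp power2_eq_square field_simps)
qed

lemma Lmap_test_ramp:
  assumes f: "\<forall>j. f j \<in> GG0" and a: "a \<in> {-1..1}"
  shows "Lmap f (test_ramp a) = primitives f a - (1 - a\<^sup>2) *\<^sub>R primitives f 0"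
proof -
  have fG: "\<forall>j. f j \<in> GG" using f by (simp add: GG0_def)
  have "Lmap f (test_ramp a) =
      Lmap f (ramp a) + Lmap f (\<lambda>s. a * (1 - a) / 2 * ramp (-1) s + (a\<^sup>2 - 1) * ramp 0 s)"
    unfolding test_ramp_def by (rule Lmap_add[OF fG]) (intro continuous_intros)+
  also have "Lmap f (\<lambda>s. a * (1 - a) / 2 * ramp (-1) s + (a\<^sup>2 - 1) * ramp 0 s) =
      (a * (1 - a) / 2) *\<^sub>R Lmap f (ramp (-1)) + (a\<^sup>2 - 1) *\<^sub>R Lmap f (ramp 0)"
    by (rule Lmap_lincomb[OF fG]) (intro continuous_intros)+
  also have "Lmap f (ramp a) + ((a * (1 - a) / 2) *\<^sub>R Lmap f (ramp (-1)) + (a\<^sup>2 - 1) *\<^sub>R Lmap f (ramp 0))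
      = primitives f a - (1 - a\<^sup>2) *\<^sub>R primitives f 0"
  proof -
    have r: "Lmap f (ramp (-1)) = 2 *\<^sub>R 1" "Lmap f (ramp 0) = 1 + primitives f 0"
      using Lmap_ramp[OF f, of "-1"] Lmap_ramp[OF f, of 0] by simp_all
    show ?thesis
      by (simp add: Lmap_ramp[OF f a] r) (simp add: vec_eq_iff power2_eq_square algebra_simps)
  qed
  finally show ?thesis .
qed

lemma annihilator_primitives_parabola:
  assumes f: "\<forall>j. f j \<in> GG0" and c: "\<And>h. admissible h \<Longrightarrow> c \<bullet> Lmap f h = 0"
    and a: "a \<in> {-1..1}"
  shows "c \<bullet> primitives f a = (1 - a\<^sup>2) * (c \<bullet> primitives f 0)"
  using c[OF admissible_test_ramp[OF a]] by (simp add: Lmap_test_ramp[OF f a] inner_diff_right)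

lemma LIN_no_annihilator:
  fixes f :: "'n::finite \<Rightarrow> real \<Rightarrow> real"
  assumes lin: "LIN f" and "c \<noteq> 0"
  shows "\<exists>h. admissible h \<and> c \<bullet> Lmap f h \<noteq> 0"
proof (rule ccontr)
  assume "\<not> ?thesis"
  then have ann: "\<And>h. admissible h \<Longrightarrow> c \<bullet> Lmap f h = 0" by blast
  have f: "\<forall>j. f j \<in> GG0" using lin by (simp add: LIN_def)
  then have fG: "\<forall>j. f j \<in> GG" by (simp add: GG0_def)
  define g where "g = (\<lambda>s. \<Sum>j\<in>UNIV. c$j * f j s)"
  define K where "K = c \<bullet> primitives f 0"
  have g_linear: "g a = - 2 * K * a" if a: "a \<in> {-1..1}" for a
  proof (rule continuous_eq_derivative_of_integral[OF _ _ a])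
    show "continuous_on {-1..1} g"
      unfolding g_def by (intro continuous_intros GG_continuous_on fG[rule_format])
    show "integral {-1..y} g = (1 - y\<^sup>2) * K" if "y \<in> {-1..1}" for y
      using inner_primitives[OF fG that, of c] annihilator_primitives_parabola[OF f ann that]
      by (simp add: g_def K_def)
    show "((\<lambda>y. (1 - y\<^sup>2) * K) has_real_derivative - 2 * K * a) (at a within {-1..1})"
      by (auto intro!: derivative_eq_intros)
  qed simp
  have "\<forall>t\<in>{-1..1}. (\<Sum>k\<in>UNIV. (case k of None \<Rightarrow> 2 * K | Some j \<Rightarrow> c$j) *
      (case k of None \<Rightarrow> ident | Some j \<Rightarrow> f j) t) = 0"
    using g_linear by (simp add: sum_UNIV_option ident_def g_def)
  then have "\<forall>k. (case k of None \<Rightarrow> 2 * K | Some j \<Rightarrow> c$j) = 0"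
    using lin unfolding LIN_def lin_indep_fam_def by blast
  then have "c = 0"
    by (metis option.simps(5) vec_eq_iff zero_index)
  with \<open>c \<noteq> 0\<close> show False by simp
qed

lemma admissible_odd_test_ramp:
  assumes a: "a \<in> {-1..1}"
  shows "admissible (\<lambda>s. odd_ramp a s - (1 - a) * s)"
  unfolding admissible_def
proof (intro conjI)
  have "(2 + \<bar>1 - a\<bar> * 1)-lipschitz_on {-1..1} (\<lambda>s. odd_ramp a s - (1 - a) * s)"
    by (intro lipschitz_on_diff lipschitz_on_cmult_real lipschitz_on_odd_ramp lipschitz_on_id)
  then show "\<exists>C. C-lipschitz_on {-1..1} (\<lambda>s. odd_ramp a s - (1 - a) * s)" ..
  show "odd_ramp a (-1) - (1 - a) * -1 = 0" "odd_ramp a 1 - (1 - a) * 1 = 0"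
    using a by (auto simp: odd_ramp_def ramp_def)
  show "integral {-1..1} (\<lambda>s. odd_ramp a s - (1 - a) * s) = 0"
    using integral_odd_eq_0[of 1] by (simp add: odd_ramp_def)
qed

lemma annihilator_primitives_even:
  assumes f: "\<forall>j. f j \<in> GG0"
    and c: "\<And>h. admissible h \<Longrightarrow> (\<forall>t\<in>{-1..1}. h (-t) = - h t) \<Longrightarrow> c \<bullet> Lmap f h = 0"
    and a: "a \<in> {-1..1}"
  shows "c \<bullet> primitives f a = c \<bullet> primitives f (-a)"
proof -
  have fG: "\<forall>j. f j \<in> GG" using f by (simp add: GG0_def)
  have "Lmap f (\<lambda>s. odd_ramp a s - (1 - a) * s) = primitives f a - primitives f (-a)"
    using fG by (simp add: Lmap_diff Lmap_scale Lmap_odd_ramp[OF f a] Lmap_ident[OF f] continuous_intros)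
  moreover have "c \<bullet> Lmap f (\<lambda>s. odd_ramp a s - (1 - a) * s) = 0"
    by (rule c[OF admissible_odd_test_ramp[OF a]]) (simp add: odd_ramp_def)
  ultimately show ?thesis
    by (simp add: inner_diff_right)
qed

lemma LINp_no_annihilator:
  fixes f :: "'n::finite \<Rightarrow> real \<Rightarrow> real"
  assumes lin: "LINp f" and "c \<noteq> 0"
  shows "\<exists>h. admissible h \<and> (\<forall>t\<in>{-1..1}. h (-t) = - h t) \<and> c \<bullet> Lmap f h \<noteq> 0"
proof (rule ccontr)
  assume "\<not> ?thesis"
  then have ann: "\<And>h. admissible h \<Longrightarrow> (\<forall>t\<in>{-1..1}. h (-t) = - h t) \<Longrightarrow> c \<bullet> Lmap f h = 0"
    by blast
  have f: "\<forall>j. f j \<in> GG0" using lin by (simp add: LINp_def)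
  then have fG: "\<forall>j. f j \<in> GG" by (simp add: GG0_def)
  define g where "g = (\<lambda>s. \<Sum>j\<in>UNIV. c$j * f j s)"
  have gc: "continuous_on {-1..1} g"
    unfolding g_def by (intro continuous_intros GG_continuous_on fG[rule_format])
  have g_odd: "g a = - g (-a)" if a: "a \<in> {-1..1}" for a
  proof (rule continuous_eq_derivative_of_integral[OF gc _ a])
    show "integral {-1..y} g = integral {y..1} (\<lambda>s. g (-s))" if "y \<in> {-1..1}" for y
      using inner_primitives[OF fG that, of c] inner_primitives[OF fG, of "-y" c] that
        annihilator_primitives_even[OF f ann that]
        Henstock_Kurzweil_Integration.integral_reflect_real[where a="-1" and b="-y" and f=g]
      by (simp add: g_def)
    show "((\<lambda>y. integral {y..1} (\<lambda>s. g (-s))) has_real_derivative - g (-a)) (at a within {-1..1})"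
      using gc a by (intro integral_has_real_derivative' continuous_on_compose2[OF gc]) (auto intro: continuous_intros)
  qed simp
  have "\<forall>t\<in>{-1..1}. (\<Sum>j\<in>UNIV. c$j * even_part (f j) t) = 0"
  proof
    fix t :: real assume "t \<in> {-1..1}"
    have "(\<Sum>j\<in>UNIV. c$j * even_part (f j) t) = (\<Sum>j\<in>UNIV. c$j * f j t + c$j * f j (-t)) / 2"
      by (simp add: even_part_def sum_divide_distrib algebra_simps)
    also have "\<dots> = (g t + g (-t)) / 2"
      by (simp add: g_def sum.distrib)
    finally have "(\<Sum>j\<in>UNIV. c$j * even_part (f j) t) = (g t + g (-t)) / 2" .
    then show "(\<Sum>j\<in>UNIV. c$j * even_part (f j) t) = 0"
      using g_odd[OF \<open>t \<in> {-1..1}\<close>] by simp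
  qed
  then have "\<forall>j. c$j = 0"
    using lin unfolding LINp_def lin_indep_fam_def by blast
  then have "c = 0"
    by (simp add: vec_eq_iff)
  with \<open>c \<noteq> 0\<close> show False by simp
qed

section \<open>Generic extensions of linearly independent tuples\<close>

definition is_lin_comb :: "('i::finite \<Rightarrow> real \<Rightarrow> real) \<Rightarrow> (real \<Rightarrow> real) \<Rightarrow> bool" where
  "is_lin_comb F g \<longleftrightarrow> (\<exists>e. \<forall>t\<in>{-1..1}. g t = (\<Sum>i\<in>UNIV. e i * F i t))"

lemma is_lin_comb_lincomb:
  assumes "is_lin_comb F g" "is_lin_comb F h"
  shows "is_lin_comb F (\<lambda>t. x * g t + y * h t)"
proof -
  obtain d e where "\<forall>t\<in>{-1..1}. g t = (\<Sum>i\<in>UNIV. d i * F i t)" "\<forall>t\<in>{-1..1}. h t = (\<Sum>i\<in>UNIV. e i * F i t)"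
    using assms by (auto simp: is_lin_comb_def)
  then have "\<forall>t\<in>{-1..1}. x * g t + y * h t = (\<Sum>i\<in>UNIV. (x * d i + y * e i) * F i t)"
    by (simp add: sum_distrib_left sum.distrib distrib_right mult.assoc)
  then show ?thesis
    unfolding is_lin_comb_def by (intro exI[of _ "\<lambda>i. x * d i + y * e i"]) simp
qed

lemma lin_indep_fam_option:
  fixes F :: "'i::finite \<Rightarrow> real \<Rightarrow> real"
  assumes indep: "lin_indep_fam F" and G: "\<not> is_lin_comb F G"
  shows "lin_indep_fam (case_option G F)"
  unfolding lin_indep_fam_def
proof (rule allI, rule impI)
  fix c :: "'i option \<Rightarrow> real"
  assume "\<forall>t\<in>{-1..1}. (\<Sum>k\<in>UNIV. c k * case_option G F k t) = 0"
  then have sum0: "\<forall>t\<in>{-1..1}. c None * G t + (\<Sum>i\<in>UNIV. c (Some i) * F i t) = 0"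
    by (simp add: sum_UNIV_option)
  have "c None = 0"
  proof (rule ccontr)
    assume "c None \<noteq> 0"
    have "G t = (\<Sum>i\<in>UNIV. (- c (Some i) / c None) * F i t)" if "t \<in> {-1..1}" for t
    proof -
      have "c None * G t + (\<Sum>i\<in>UNIV. c (Some i) * F i t) = 0"
        using sum0 that by blast
      then have "- (\<Sum>i\<in>UNIV. c (Some i) * F i t) = c None * G t"
        by linarith
      have "(\<Sum>i\<in>UNIV. (- c (Some i) / c None) * F i t) = - (\<Sum>i\<in>UNIV. c (Some i) * F i t) / c None"
        by (simp add: sum_divide_distrib sum_negf)
      also have "\<dots> = (c None * G t) / c None"
        by (simp only: \<open>- (\<Sum>i\<in>UNIV. c (Some i) * F i t) = c None * G t\<close>)
      also have "\<dots> = G t"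
        using \<open>c None \<noteq> 0\<close> by simp
      finally show ?thesis by simp
    qed
    then have "is_lin_comb F G"
      unfolding is_lin_comb_def by (intro exI[of _ "\<lambda>i. - c (Some i) / c None"]) simp
    with G show False
      by simp
  qed
  moreover have "\<forall>i. c (Some i) = 0"
    using indep[unfolded lin_indep_fam_def, rule_format, of "\<lambda>i. c (Some i)"] sum0 \<open>c None = 0\<close>
    by simp
  ultimately have "c k = 0" for k
    by (cases k) simp_all
  then show "\<forall>k. c k = 0"
    by blast
qed

lemma lin_indep_fam_reindex:
  fixes F :: "'i::finite \<Rightarrow> real \<Rightarrow> real" and \<sigma> :: "'i \<Rightarrow> 'i"
  assumes "bij \<sigma>" "lin_indep_fam F"
  shows "lin_indep_fam (F \<circ> \<sigma>)"
  unfolding lin_indep_fam_def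
proof (rule allI, rule impI)
  fix c :: "'i \<Rightarrow> real"
  assume c: "\<forall>t\<in>{-1..1}. (\<Sum>k\<in>UNIV. c k * (F \<circ> \<sigma>) k t) = 0"
  have "(\<Sum>j\<in>UNIV. c (inv \<sigma> j) * F j t) = (\<Sum>k\<in>UNIV. c k * F (\<sigma> k) t)" for t
    using sum.reindex[OF bij_is_inj[OF assms(1)], of "\<lambda>j. c (inv \<sigma> j) * F j t"] assms(1)
    by (simp add: bij_is_surj bij_is_inj inv_f_f)
  then have "\<forall>j. c (inv \<sigma> j) = 0"
    using assms(2)[unfolded lin_indep_fam_def, rule_format, of "\<lambda>j. c (inv \<sigma> j)"] c by simp
  then show "\<forall>k. c k = 0"
    by (metis assms(1) bij_is_inj inv_f_f)
qed

lemma LIN_ext_tuple: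
  fixes f :: "'n::finite \<Rightarrow> real \<Rightarrow> real"
  assumes lin: "LIN f" and g: "g \<in> GG0" and not_comb: "\<not> is_lin_comb (case_option ident f) g"
  shows "LIN (ext_tuple f g)"
proof -
  define \<sigma> :: "'n option option \<Rightarrow> 'n option option" where
    "\<sigma> k = (case k of None \<Rightarrow> Some None | Some None \<Rightarrow> None | Some (Some j) \<Rightarrow> Some (Some j))" for k
  have "\<sigma> \<circ> \<sigma> = id"
    by (auto simp: \<sigma>_def fun_eq_iff split: option.split)
  then have "bij \<sigma>"
    using o_bij by blast
  moreover have "lin_indep_fam (case_option g (case_option ident f))"
    using lin not_comb by (rule_tac lin_indep_fam_option) (simp_all add: LIN_def)
  ultimately have "lin_indep_fam (case_option g (case_option ident f) \<circ> \<sigma>)"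
    by (rule lin_indep_fam_reindex)
  moreover have "case_option g (case_option ident f) \<circ> \<sigma> =
      (\<lambda>k. case k of None \<Rightarrow> ident | Some j \<Rightarrow> ext_tuple f g j)"
    by (auto simp: \<sigma>_def ext_tuple_def fun_eq_iff split: option.split)
  ultimately show ?thesis
    using lin g by (auto simp: LIN_def ext_tuple_def split: option.split)
qed

lemma LINp_ext_tuple:
  fixes f :: "'n::finite \<Rightarrow> real \<Rightarrow> real"
  assumes lin: "LINp f" and g: "g \<in> GG0"
    and not_comb: "\<not> is_lin_comb (\<lambda>j. even_part (f j)) (even_part g)"
  shows "LINp (ext_tuple f g)"
proof -
  have "lin_indep_fam (case_option (even_part g) (\<lambda>j. even_part (f j)))"
    using lin not_comb by (rule_tac lin_indep_fam_option) (simp_all add: LINp_def)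
  moreover have "case_option (even_part g) (\<lambda>j. even_part (f j)) = (\<lambda>j. even_part (ext_tuple f g j))"
    by (auto simp: ext_tuple_def fun_eq_iff split: option.split)
  ultimately show ?thesis
    using lin g by (auto simp: LINp_def ext_tuple_def split: option.split)
qed

text \<open>Real functions form a vector space under pointwise operations; the scalar action is
  spelled out because \<open>real \<Rightarrow> real\<close> is not an instance of \<open>real_vector\<close>.\<close>

definition fun_scale :: "real \<Rightarrow> (real \<Rightarrow> real) \<Rightarrow> real \<Rightarrow> real" where
  "fun_scale c u = (\<lambda>x. c * u x)"

interpretation fun_space: vector_space fun_scale
  by unfold_locales (auto simp: fun_scale_def fun_eq_iff algebra_simps)

lemma sum_fun_apply: "(\<Sum>v\<in>S. F v) x = (\<Sum>v\<in>S. F v x)"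
  for F :: "'a \<Rightarrow> 'b \<Rightarrow> 'c::comm_monoid_add"
  by (induction S rule: infinite_finite_induct) auto

text \<open>Functions are compared on \<open>[0,1]\<close> only, where the even part of a ramp at \<open>a \<ge> 0\<close>
  is half the ramp.\<close>

definition restrict_unit :: "(real \<Rightarrow> real) \<Rightarrow> real \<Rightarrow> real" where
  "restrict_unit u = (\<lambda>s. if s \<in> {0..1} then u s else 0)"

lemma ramps_lin_indep:
  fixes A :: "real set"
  assumes "finite A" "A \<subseteq> {0..<1}" "\<forall>s\<in>{0..1}. (\<Sum>a\<in>A. c a * ramp a s) = 0"
  shows "\<forall>a\<in>A. c a = 0"
  using assms
proof (induction A arbitrary: c rule: finite_linorder_min_induct)
  case (insert b A)
  define s0 where "s0 = (b + Min (insert 1 A)) / 2"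
  have "b < Min (insert 1 A)" "Min (insert 1 A) \<le> 1" "\<forall>a\<in>A. Min (insert 1 A) \<le> a"
    using insert by auto
  then have s0: "s0 \<in> {0..1}" "b < s0" "\<forall>a\<in>A. s0 < a"
    using insert.prems(1) unfolding s0_def by auto
  have "(\<Sum>a\<in>A. c a * ramp a s0) = 0"
    using s0(3) by (intro sum.neutral) (auto simp: ramp_def)
  moreover have "b \<notin> A"
    using insert.hyps(2) by blast
  ultimately have "(\<Sum>a\<in>insert b A. c a * ramp a s0) = c b * (s0 - b)"
    using insert.hyps(1) s0(2) by (simp add: ramp_def)
  then have "c b * (s0 - b) = 0"
    using insert.prems(2) s0(1) by simp
  then have "c b = 0"
    using s0(2) by simp
  moreover have "\<forall>s\<in>{0..1}. (\<Sum>a\<in>A. c a * ramp a s) = 0"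
    using insert.prems(2) insert.hyps(1) \<open>b \<notin> A\<close> \<open>c b = 0\<close> by simp
  ultimately show ?case
    using insert.IH insert.prems(1) by auto
qed simp

lemma inj_on_restrict_unit_ramp: "inj_on (\<lambda>a. restrict_unit (ramp a)) {0..<1}"
proof (rule inj_onI)
  fix a b assume ab: "a \<in> {0..<1}" "b \<in> {0..<1}" "restrict_unit (ramp a) = restrict_unit (ramp b)"
  have "ramp a a = ramp b a" "ramp a b = ramp b b"
    using fun_cong[OF ab(3), of a] fun_cong[OF ab(3), of b] ab(1,2)
    by (auto simp: restrict_unit_def)
  then show "a = b"
    by (auto simp: ramp_def max_def split: if_splits)
qed

lemma restrict_unit_ramps_independent:
  assumes A: "finite A" "A \<subseteq> {0..<1}"
  shows "fun_space.independent ((\<lambda>a. restrict_unit (ramp a)) ` A)"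
proof (rule fun_space.independent_if_scalars_zero)
  have inj: "inj_on (\<lambda>a. restrict_unit (ramp a)) A"
    using inj_on_subset[OF inj_on_restrict_unit_ramp A(2)] .
  show "finite ((\<lambda>a. restrict_unit (ramp a)) ` A)"
    using A(1) by simp
  fix u x assume sum0: "(\<Sum>x\<in>(\<lambda>a. restrict_unit (ramp a)) ` A. fun_scale (u x) x) = 0"
    and x: "x \<in> (\<lambda>a. restrict_unit (ramp a)) ` A"
  have "\<forall>s\<in>{0..1}. (\<Sum>a\<in>A. u (restrict_unit (ramp a)) * ramp a s) = 0"
  proof
    fix s :: real assume s: "s \<in> {0..1}"
    have "(\<Sum>a\<in>A. u (restrict_unit (ramp a)) * restrict_unit (ramp a) s) = 0"
      using fun_cong[OF sum0, of s] by (simp add: sum_fun_apply fun_scale_def sum.reindex[OF inj])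
    then show "(\<Sum>a\<in>A. u (restrict_unit (ramp a)) * ramp a s) = 0"
      using s by (simp add: restrict_unit_def)
  qed
  then have "\<forall>a\<in>A. u (restrict_unit (ramp a)) = 0"
    by (rule ramps_lin_indep[OF A])
  then show "u x = 0"
    using x by auto
qed

lemma ramps_not_in_finite_span:
  assumes W: "finite W"
  obtains a where "a \<in> {0..<1}" "restrict_unit (ramp a) \<notin> fun_space.span W"
proof (rule ccontr)
  assume "\<not> thesis"
  with that have span: "\<And>a. a \<in> {0..<1} \<Longrightarrow> restrict_unit (ramp a) \<in> fun_space.span W"
    by blast
  obtain A :: "real set" where A: "finite A" "card A = Suc (card W)" "A \<subseteq> {0..<1}"
    using infinite_arbitrarily_large[of "{0..<1::real}"] by auto
  have "(\<lambda>a. restrict_unit (ramp a)) ` A \<subseteq> fun_space.span W"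
    using span A(3) by auto
  then have "card ((\<lambda>a. restrict_unit (ramp a)) ` A) \<le> card W"
    using fun_space.independent_span_bound[OF W restrict_unit_ramps_independent[OF A(1,3)]] by blast
  moreover have "card ((\<lambda>a. restrict_unit (ramp a)) ` A) = Suc (card W)"
    using card_image[OF inj_on_subset[OF inj_on_restrict_unit_ramp A(3)]] A(2) by simp
  ultimately show False
    by simp
qed

lemma linear_op_sum:
  fixes P :: "(real \<Rightarrow> real) \<Rightarrow> real \<Rightarrow> real"
  assumes P_add: "\<And>g h. P (\<lambda>s. g s + h s) = (\<lambda>s. P g s + P h s)"
    and P_scale: "\<And>c g. P (\<lambda>s. c * g s) = (\<lambda>s. c * P g s)"
  shows "P (\<lambda>s. \<Sum>k\<in>K. w k * g k s) = (\<lambda>s. \<Sum>k\<in>K. w k * P (g k) s)"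
proof -
  have P0: "P (\<lambda>_. 0) = (\<lambda>_. 0)"
    using P_scale[of 0 "\<lambda>_. 0"] by simp
  show ?thesis
  proof (induction K rule: infinite_finite_induct)
    case (insert k K)
    then show ?case
      using P_add[of "\<lambda>s. w k * g k s" "\<lambda>s. \<Sum>k\<in>K. w k * g k s"] by (simp add: P_scale)
  qed (simp_all add: P0)
qed

text \<open>The subtraction is written as \<open>+ (-1) * \<dots>\<close> so that the additivity and homogeneity
  hypotheses on \<open>P\<close> below apply syntactically.\<close>

lemma admissible_kernel_projection:
  fixes f hk :: "'n::finite \<Rightarrow> real \<Rightarrow> real"
  assumes f: "\<forall>j. f j \<in> GG0"
    and hk: "\<And>k. admissible (hk k)" "\<And>k. Lmap f (hk k) = axis k 1"
    and g: "admissible g"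
  shows "admissible (\<lambda>s. g s + (-1) * (\<Sum>k\<in>UNIV. Lmap f g $ k * hk k s))"
    and "Lmap f (\<lambda>s. g s + (-1) * (\<Sum>k\<in>UNIV. Lmap f g $ k * hk k s)) = 0"
proof -
  have fG: "\<forall>j. f j \<in> GG" using f by (simp add: GG0_def)
  have hk_sum: "admissible (\<lambda>s. \<Sum>k\<in>UNIV. Lmap f g $ k * hk k s)"
    using hk(1) by (intro admissible_sum) auto
  show "admissible (\<lambda>s. g s + (-1) * (\<Sum>k\<in>UNIV. Lmap f g $ k * hk k s))"
    using admissible_lincomb[OF g hk_sum, of 1 "-1"] by simp
  have "Lmap f (\<lambda>s. g s + (-1) * (\<Sum>k\<in>UNIV. Lmap f g $ k * hk k s))
      = Lmap f g + (-1) *\<^sub>R (\<Sum>k\<in>UNIV. Lmap f g $ k *\<^sub>R Lmap f (hk k))"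
    using Lmap_lincomb[OF fG admissible_continuous_on[OF g] admissible_continuous_on[OF hk_sum], of 1 "-1"]
      Lmap_sum[OF fG admissible_continuous_on[OF hk(1)], where K=UNIV and w="\<lambda>k. Lmap f g $ k"]
    by simp
  then show "Lmap f (\<lambda>s. g s + (-1) * (\<Sum>k\<in>UNIV. Lmap f g $ k * hk k s)) = 0"
    using basis_expansion[of "Lmap f g"] by (simp add: hk(2) scalar_mult_eq_scaleR)
qed

lemma restrict_unit_in_span:
  fixes F :: "'i::finite \<Rightarrow> real \<Rightarrow> real" and G :: "'k::finite \<Rightarrow> real \<Rightarrow> real"
  assumes \<kappa>: "\<kappa> \<noteq> 0"
    and u: "\<And>s. s \<in> {0..1} \<Longrightarrow>
      \<kappa> * u s = (\<Sum>i\<in>UNIV. d i * F i s) + (\<Sum>k\<in>UNIV. e k * G k s) + x * p s + y * q s"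
  shows "restrict_unit u \<in> fun_space.span (restrict_unit ` (range F \<union> range G \<union> {p, q}))"
proof -
  define X where "X = (\<Sum>i\<in>UNIV. fun_scale (d i) (restrict_unit (F i)))
    + (\<Sum>k\<in>UNIV. fun_scale (e k) (restrict_unit (G k)))
    + fun_scale x (restrict_unit p) + fun_scale y (restrict_unit q)"
  have "restrict_unit u = fun_scale (1 / \<kappa>) X"
  proof
    fix s
    show "restrict_unit u s = fun_scale (1 / \<kappa>) X s"
    proof (cases "s \<in> {0..1}")
      case True
      then show ?thesis
        using u[OF True] \<kappa> by (simp add: X_def fun_scale_def restrict_unit_def sum_fun_apply field_simps)
    next
      case False
      then have "restrict_unit v s = 0" for v
        by (auto simp: restrict_unit_def)
      then show ?thesis
        by (simp add: fun_scale_def X_def sum_fun_apply)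
    qed
  qed
  moreover have "X \<in> fun_space.span (restrict_unit ` (range F \<union> range G \<union> {p, q}))"
    unfolding X_def
    by (intro fun_space.span_add fun_space.span_sum fun_space.span_scale fun_space.span_base) auto
  ultimately show ?thesis
    by (simp add: fun_space.span_scale)
qed

lemma restrict_unit_ramp_in_span:
  fixes F :: "'i::finite \<Rightarrow> real \<Rightarrow> real" and hk :: "'n::finite \<Rightarrow> real \<Rightarrow> real"
  assumes P_add: "\<And>g h. P (\<lambda>s. g s + h s) = (\<lambda>s. P g s + P h s)"
    and P_scale: "\<And>c g. P (\<lambda>s. c * g s) = (\<lambda>s. c * P g s)"
    and P_ramp: "\<And>a s. a \<in> {0..<1} \<Longrightarrow> s \<in> {0..1} \<Longrightarrow> P (ramp a) s = \<kappa> * ramp a s"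
    and \<kappa>: "\<kappa> \<noteq> 0" and a: "a \<in> {0..<1}"
    and comb: "is_lin_comb F (P (\<lambda>s. test_ramp a s + (-1) * (\<Sum>k\<in>UNIV. v$k * hk k s)))"
  shows "restrict_unit (ramp a) \<in> fun_space.span
    (restrict_unit ` (range F \<union> range (\<lambda>k. P (hk k)) \<union> {P (ramp (-1)), P (ramp 0)}))"
proof -
  obtain e where e: "\<forall>t\<in>{-1..1}.
      P (\<lambda>s. test_ramp a s + (-1) * (\<Sum>k\<in>UNIV. v$k * hk k s)) t = (\<Sum>i\<in>UNIV. e i * F i t)"
    using comb unfolding is_lin_comb_def by blast
  have Psum: "P (\<lambda>s. \<Sum>k\<in>UNIV. v$k * hk k s) = (\<lambda>s. \<Sum>k\<in>UNIV. v$k * P (hk k) s)"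
    by (rule linear_op_sum[OF P_add P_scale])
  have P_test: "P (\<lambda>s. test_ramp a s + (-1) * (\<Sum>k\<in>UNIV. v$k * hk k s)) =
      (\<lambda>s. (P (ramp a) s + (a * (1 - a) / 2 * P (ramp (-1)) s + (a\<^sup>2 - 1) * P (ramp 0) s))
        + (-1) * (\<Sum>k\<in>UNIV. v$k * P (hk k) s))"
    unfolding test_ramp_def[abs_def] by (simp only: P_add P_scale Psum)
  show ?thesis
  proof (rule restrict_unit_in_span[OF \<kappa>])
    fix s :: real assume s: "s \<in> {0..1}"
    then have "s \<in> {-1..1}"
      by auto
    then show "\<kappa> * ramp a s = (\<Sum>i\<in>UNIV. e i * F i s) + (\<Sum>k\<in>UNIV. v$k * P (hk k) s)
        + (- (a * (1 - a) / 2)) * P (ramp (-1)) s + (- (a\<^sup>2 - 1)) * P (ramp 0) s"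
      using e[unfolded P_test, rule_format, OF \<open>s \<in> {-1..1}\<close>] P_ramp[OF a s]
      by (simp add: algebra_simps)
  qed
qed

lemma exists_admissible_kernel_not_lin_comb:
  fixes F :: "'i::finite \<Rightarrow> real \<Rightarrow> real" and f hk :: "'n::finite \<Rightarrow> real \<Rightarrow> real"
  assumes f: "\<forall>j. f j \<in> GG0"
    and hk: "\<And>k. admissible (hk k)" "\<And>k. Lmap f (hk k) = axis k 1"
    and P_add: "\<And>g h. P (\<lambda>s. g s + h s) = (\<lambda>s. P g s + P h s)"
    and P_scale: "\<And>c g. P (\<lambda>s. c * g s) = (\<lambda>s. c * P g s)"
    and P_ramp: "\<And>a s. a \<in> {0..<1} \<Longrightarrow> s \<in> {0..1} \<Longrightarrow> P (ramp a) s = \<kappa> * ramp a s"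
    and \<kappa>: "\<kappa> \<noteq> 0"
  obtains h where "admissible h" "Lmap f h = 0" "\<not> is_lin_comb F (P h)"
proof (rule ccontr)
  assume "\<not> thesis"
  with that have bad: "\<And>h. admissible h \<Longrightarrow> Lmap f h = 0 \<Longrightarrow> is_lin_comb F (P h)"
    by blast
  define W where
    "W = restrict_unit ` (range F \<union> range (\<lambda>k. P (hk k)) \<union> {P (ramp (-1)), P (ramp 0)})"
  have "restrict_unit (ramp a) \<in> fun_space.span W" if a: "a \<in> {0..<1}" for a
  proof -
    have "admissible (test_ramp a)"
      using a by (intro admissible_test_ramp) auto
    then have "is_lin_comb F (P (\<lambda>s. test_ramp a s +
        (-1) * (\<Sum>k\<in>UNIV. Lmap f (test_ramp a) $ k * hk k s)))"
      by (intro bad admissible_kernel_projection[OF f hk])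
    from restrict_unit_ramp_in_span[OF P_add P_scale P_ramp \<kappa> a this] show ?thesis
      unfolding W_def .
  qed
  moreover have "finite W"
    by (simp add: W_def)
  ultimately show False
    using ramps_not_in_finite_span by metis
qed

lemma interior_scaled_mem:
  fixes y :: "'a::real_normed_vector"
  assumes "y \<in> interior A"
  obtains \<sigma> where "\<sigma> > 0" "(1 + \<sigma>) *\<^sub>R y \<in> A"
proof -
  obtain r where r: "r > 0" "ball y r \<subseteq> A"
    using assms mem_interior by blast
  define \<sigma> where "\<sigma> = r / (2 * (norm y + 1))"
  have "norm y + 1 > 0"
    by (simp add: add_nonneg_pos)
  then have "\<sigma> > 0"
    using r(1) by (simp add: \<sigma>_def)
  moreover have "\<sigma> * norm y < r"
  proof -
    have "\<sigma> * norm y \<le> \<sigma> * (norm y + 1)"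
      using \<open>\<sigma> > 0\<close> by simp
    also have "\<dots> = r / 2"
      using \<open>norm y + 1 > 0\<close> by (simp add: \<sigma>_def field_simps)
    finally show ?thesis using r(1) by simp
  qed
  then have "(1 + \<sigma>) *\<^sub>R y \<in> ball y r"
    using \<open>\<sigma> > 0\<close> by (simp add: dist_norm algebra_simps)
  ultimately show ?thesis
    using r(2) that by blast
qed

lemma ident_plus_multiple_GG0:
  assumes h: "admissible h"
  obtains \<epsilon> where "\<epsilon> > 0" "(\<lambda>s. s + \<epsilon> * h s) \<in> GG0"
proof -
  obtain C where C: "C-lipschitz_on {-1..1} h"
    using h by (auto simp: admissible_def)
  define \<epsilon> where "\<epsilon> = 1 / (C + 1)"
  have "\<epsilon> > 0" "\<epsilon> * C < 1"
    using lipschitz_on_nonneg[OF C] by (simp_all add: \<epsilon>_def field_simps)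
  have "(\<lambda>s. s + \<epsilon> * h s) \<in> GG0"
  proof (rule ident_plus_contraction_GG0)
    show "admissible (\<lambda>s. \<epsilon> * h s)"
      using admissible_lincomb[OF h h, of \<epsilon> 0] by simp
    show "(\<bar>\<epsilon>\<bar> * C)-lipschitz_on {-1..1} (\<lambda>s. \<epsilon> * h s)"
      using C by (rule lipschitz_on_cmult_real)
    show "\<bar>\<epsilon>\<bar> * C < 1"
      using \<open>\<epsilon> > 0\<close> \<open>\<epsilon> * C < 1\<close> by simp
  qed
  with \<open>\<epsilon> > 0\<close> show ?thesis
    by (rule that)
qed

lemma is_lin_comb_diff:
  assumes "is_lin_comb F g" "is_lin_comb F h" "c \<noteq> 0" "\<And>t. h t - g t = c * d t"
  shows "is_lin_comb F d"
proof -
  have "d = (\<lambda>t. (1 / c) * h t + (- 1 / c) * g t)"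
    using assms(3,4) by (simp add: fun_eq_iff field_simps)
  then show ?thesis
    using is_lin_comb_lincomb[OF assms(2,1), of "1 / c" "- 1 / c"] by simp
qed

lemma interior_Lmap_GG0_shrink:
  assumes f: "\<forall>j. f j \<in> GG0" and y: "y \<in> interior (Lmap f ` GG0)"
  obtains g1 \<mu> where "g1 \<in> GG0" "0 < \<mu>" "\<mu> \<le> 1"
    "\<And>q. q \<in> GG0 \<Longrightarrow> Lmap f q = 0 \<Longrightarrow> Lmap f (\<lambda>x. (1 - \<mu>) * g1 x + \<mu> * q x) = y"
proof -
  have fG: "\<forall>j. f j \<in> GG" using f by (simp add: GG0_def)
  obtain \<sigma> where "\<sigma> > 0" "(1 + \<sigma>) *\<^sub>R y \<in> Lmap f ` GG0"
    using y by (rule interior_scaled_mem)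
  then obtain g1 where g1: "g1 \<in> GG0" "Lmap f g1 = (1 + \<sigma>) *\<^sub>R y"
    by auto
  define \<mu> where "\<mu> = \<sigma> / (1 + \<sigma>)"
  have \<mu>: "0 < \<mu>" "\<mu> \<le> 1" "(1 - \<mu>) * (1 + \<sigma>) = 1"
    using \<open>\<sigma> > 0\<close> by (simp_all add: \<mu>_def field_simps)
  have "Lmap f (\<lambda>x. (1 - \<mu>) * g1 x + \<mu> * q x) = y" if "q \<in> GG0" "Lmap f q = 0" for q
    using Lmap_lincomb[OF fG, of g1 q] g1 that \<mu>(3) by (simp add: GG0_def GG_continuous_on)
  with g1(1) \<mu>(1,2) show ?thesis
    using that by blast
qed

lemma interior_Lmap_GG0_subset:
  fixes F :: "'i::finite \<Rightarrow> real \<Rightarrow> real" and f :: "'n::finite \<Rightarrow> real \<Rightarrow> real"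
  assumes f: "\<forall>j. f j \<in> GG0"
    and h: "admissible h" "Lmap f h = 0" "\<not> is_lin_comb F (P h)"
    and P_add: "\<And>g h. P (\<lambda>s. g s + h s) = (\<lambda>s. P g s + P h s)"
    and P_scale: "\<And>c g. P (\<lambda>s. c * g s) = (\<lambda>s. c * P g s)"
  shows "interior (Lmap f ` GG0) \<subseteq> Lmap f ` {g \<in> GG0. \<not> is_lin_comb F (P g)}"
proof
  have fG: "\<forall>j. f j \<in> GG" using f by (simp add: GG0_def)
  obtain \<epsilon> where "\<epsilon> > 0" and q: "(\<lambda>s. s + \<epsilon> * h s) \<in> GG0"
    using ident_plus_multiple_GG0[OF h(1)] by blast
  have Lq: "Lmap f (\<lambda>s. s + \<epsilon> * h s) = 0"
    using Lmap_add[OF fG continuous_on_id, of "\<lambda>s. \<epsilon> * h s"] admissible_continuous_on[OF h(1)]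
    by (simp add: Lmap_scale Lmap_ident[OF f] h(2) continuous_intros)
  fix y assume "y \<in> interior (Lmap f ` GG0)"
  then obtain g1 \<mu> where g1: "g1 \<in> GG0" and \<mu>: "0 < \<mu>" "\<mu> \<le> 1"
    and preimage: "\<And>q. q \<in> GG0 \<Longrightarrow> Lmap f q = 0 \<Longrightarrow> Lmap f (\<lambda>x. (1 - \<mu>) * g1 x + \<mu> * q x) = y"
    using interior_Lmap_GG0_shrink[OF f] by blast
  define g2 g3 where "g2 = (\<lambda>x. (1 - \<mu>) * g1 x + \<mu> * x)"
    and "g3 = (\<lambda>x. (1 - \<mu>) * g1 x + \<mu> * (x + \<epsilon> * h x))"
  have "g2 \<in> GG0" "g3 \<in> GG0"
    unfolding g2_def g3_def using \<mu> g1 ident_GG0 q by (simp_all add: GG0_convex_comb)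
  have "Lmap f g2 = y" "Lmap f g3 = y"
    unfolding g2_def g3_def using preimage[OF ident_GG0] preimage[OF q Lq] f
    by (simp_all add: Lmap_ident)
  have "P g3 t - P g2 t = (\<mu> * \<epsilon>) * P h t" for t
    unfolding g2_def g3_def by (simp only: P_add P_scale) (simp add: algebra_simps)
  then have "\<not> is_lin_comb F (P g2) \<or> \<not> is_lin_comb F (P g3)"
    using is_lin_comb_diff[of F "P g2" "P g3" "\<mu> * \<epsilon>" "P h"] h(3) \<open>\<mu> > 0\<close> \<open>\<epsilon> > 0\<close> by auto
  then show "y \<in> Lmap f ` {g \<in> GG0. \<not> is_lin_comb F (P g)}"
  proof
    assume "\<not> is_lin_comb F (P g2)"
    then show ?thesis
      using \<open>g2 \<in> GG0\<close> \<open>Lmap f g2 = y\<close> by (intro rev_image_eqI[of g2]) simp_all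
  next
    assume "\<not> is_lin_comb F (P g3)"
    then show ?thesis
      using \<open>g3 \<in> GG0\<close> \<open>Lmap f g3 = y\<close> by (intro rev_image_eqI[of g3]) simp_all
  qed
qed

text \<open>\<open>P\<close> is the identity for \<open>LIN\<close> and the even part for \<open>LINp\<close>.\<close>

lemma interior_Lmap_GG0_eq:
  fixes F :: "'i::finite \<Rightarrow> real \<Rightarrow> real" and f hk :: "'n::finite \<Rightarrow> real \<Rightarrow> real"
  assumes f: "\<forall>j. f j \<in> GG0"
    and hk: "\<And>k. admissible (hk k)" "\<And>k. Lmap f (hk k) = axis k 1"
    and P_add: "\<And>g h. P (\<lambda>s. g s + h s) = (\<lambda>s. P g s + P h s)"
    and P_scale: "\<And>c g. P (\<lambda>s. c * g s) = (\<lambda>s. c * P g s)"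
    and P_ramp: "\<And>a s. a \<in> {0..<1} \<Longrightarrow> s \<in> {0..1} \<Longrightarrow> P (ramp a) s = \<kappa> * ramp a s"
    and \<kappa>: "\<kappa> \<noteq> 0"
    and S: "\<And>g. g \<in> GG0 \<Longrightarrow> \<not> is_lin_comb F (P g) \<Longrightarrow> g \<in> S" "S \<subseteq> GG0"
  shows "interior (Lmap f ` GG0) = interior (Lmap f ` S)"
proof
  obtain h where h: "admissible h" "Lmap f h = 0" "\<not> is_lin_comb F (P h)"
    using exists_admissible_kernel_not_lin_comb[OF f hk P_add P_scale P_ramp \<kappa>] .
  have "{g \<in> GG0. \<not> is_lin_comb F (P g)} \<subseteq> S"
    using S(1) by blast
  then have "interior (Lmap f ` GG0) \<subseteq> Lmap f ` S"
    using interior_Lmap_GG0_subset[OF f h P_add P_scale] by (meson image_mono order_trans)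
  then show "interior (Lmap f ` GG0) \<subseteq> interior (Lmap f ` S)"
    by (rule interior_maximal) simp
  show "interior (Lmap f ` S) \<subseteq> interior (Lmap f ` GG0)"
    using S(2) by (intro interior_mono image_mono)
qed

lemma convex_Lmap_image:
  assumes f: "\<forall>j. f j \<in> GG" and S: "S \<subseteq> GG"
    and convex_comb: "\<And>g h u. g \<in> S \<Longrightarrow> h \<in> S \<Longrightarrow> 0 \<le> u \<Longrightarrow> u \<le> 1 \<Longrightarrow> (\<lambda>x. (1 - u) * g x + u * h x) \<in> S"
  shows "convex (Lmap f ` S)"
  unfolding convex_def
proof (intro ballI allI impI)
  fix x y and u v :: real
  assume "x \<in> Lmap f ` S" "y \<in> Lmap f ` S" and uv: "0 \<le> u" "0 \<le> v" "u + v = 1"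
  then obtain g h where gh: "g \<in> S" "h \<in> S" "x = Lmap f g" "y = Lmap f h"
    by auto
  have "continuous_on {-1..1} g" "continuous_on {-1..1} h"
    using gh(1,2) S by (auto intro: GG_continuous_on)
  then have "Lmap f (\<lambda>s. (1 - v) * g s + v * h s) = u *\<^sub>R x + v *\<^sub>R y"
    using uv(3) gh(3,4) by (simp add: Lmap_lincomb[OF f] flip: eq_diff_eq)
  moreover have "(\<lambda>s. (1 - v) * g s + v * h s) \<in> S"
    using convex_comb[OF gh(1,2)] uv by simp
  ultimately show "u *\<^sub>R x + v *\<^sub>R y \<in> Lmap f ` S"
    by (rule rev_image_eqI[rotated, OF sym])
qed

lemma convex_interior_Lmap_GG0: "\<forall>j. f j \<in> GG \<Longrightarrow> convex (interior (Lmap f ` GG0))"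
  using GG0_convex_comb by (intro convex_interior convex_Lmap_image) (auto simp: GG0_def)

lemma convex_interior_Lmap_GG00: "\<forall>j. f j \<in> GG \<Longrightarrow> convex (interior (Lmap f ` GG00))"
  using GG00_convex_comb by (intro convex_interior convex_Lmap_image) (auto simp: GG00_def)

lemma LIN_Lmap_basis_preimages:
  fixes f :: "'n::finite \<Rightarrow> real \<Rightarrow> real"
  assumes "LIN f"
  obtains hk where "\<And>k. admissible (hk k)" "\<And>k. Lmap f (hk k) = axis k 1"
proof (rule Lmap_basis_preimages[of f "Collect admissible"])
  show "\<forall>j. f j \<in> GG"
    using assms by (simp add: LIN_def GG0_def)
  show "\<exists>h\<in>Collect admissible. c \<bullet> Lmap f h \<noteq> 0" if "c \<noteq> 0" for c
    using LIN_no_annihilator[OF assms that] by simp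
qed (auto simp: admissible_continuous_on admissible_zero admissible_lincomb that)

lemma LINp_Lmap_basis_preimages:
  fixes f :: "'n::finite \<Rightarrow> real \<Rightarrow> real"
  assumes "LINp f"
  obtains hk where "\<And>k. admissible (hk k) \<and> (\<forall>t\<in>{-1..1}. hk k (-t) = - hk k t)"
    "\<And>k. Lmap f (hk k) = axis k 1"
proof (rule Lmap_basis_preimages[of f "{h. admissible h \<and> (\<forall>t\<in>{-1..1}. h (-t) = - h t)}"])
  show "\<forall>j. f j \<in> GG"
    using assms by (simp add: LINp_def GG0_def)
  show "\<exists>h\<in>{h. admissible h \<and> (\<forall>t\<in>{-1..1}. h (-t) = - h t)}. c \<bullet> Lmap f h \<noteq> 0"
    if "c \<noteq> 0" for c
    using LINp_no_annihilator[OF assms that] by simp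
qed (auto simp: admissible_continuous_on admissible_zero admissible_lincomb algebra_simps that)

lemma zero_in_interior_Lmap_GG0:
  assumes "LIN f"
  shows "0 \<in> interior (Lmap f ` GG0)"
proof -
  obtain hk where "\<And>k. admissible (hk k)" "\<And>k. Lmap f (hk k) = axis k 1"
    using LIN_Lmap_basis_preimages[OF assms] by blast
  then show ?thesis
    using assms by (intro zero_in_interior_Lmap_image) (auto simp: LIN_def)
qed

lemma zero_in_interior_Lmap_GG00:
  assumes "LINp f"
  shows "0 \<in> interior (Lmap f ` GG00)"
proof -
  obtain hk where hk: "\<And>k. admissible (hk k) \<and> (\<forall>t\<in>{-1..1}. hk k (-t) = - hk k t)"
    "\<And>k. Lmap f (hk k) = axis k 1"
    using LINp_Lmap_basis_preimages[OF assms] by blast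
  show ?thesis
  proof (rule zero_in_interior_Lmap_image[OF _ conjunct1[OF hk(1)] hk(2)])
    show "\<forall>j. f j \<in> GG0"
      using assms by (simp add: LINp_def)
    show "(\<lambda>s. s + (\<Sum>k\<in>UNIV. t$k * hk k s)) \<in> GG00"
      if "(\<lambda>s. s + (\<Sum>k\<in>UNIV. t$k * hk k s)) \<in> GG0" for t
      using that hk(1) by (simp add: GG00_def GG0_def sum_negf[symmetric])
  qed
qed

lemma interior_Lmap_GG0_eq_LIN:
  assumes lin: "LIN f"
  shows "interior (Lmap f ` GG0) = interior (Lmap f ` {g \<in> GG0. LIN (ext_tuple f g)})"
proof -
  obtain hk where hk: "\<And>k. admissible (hk k)" "\<And>k. Lmap f (hk k) = axis k 1"
    using LIN_Lmap_basis_preimages[OF lin] by blast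
  show ?thesis
  proof (rule interior_Lmap_GG0_eq[OF _ hk, where P="\<lambda>g. g" and \<kappa>=1 and F="case_option ident f"])
    show "\<forall>j. f j \<in> GG0"
      using lin by (simp add: LIN_def)
    show "g \<in> {g \<in> GG0. LIN (ext_tuple f g)}"
      if "g \<in> GG0" "\<not> is_lin_comb (case_option ident f) g" for g
      using LIN_ext_tuple[OF lin that] that(1) by simp
  qed auto
qed

lemma interior_Lmap_GG0_eq_LINp:
  assumes lin: "LINp f"
  shows "interior (Lmap f ` GG0) = interior (Lmap f ` {g \<in> GG0. LINp (ext_tuple f g)})"
proof -
  obtain hk where hk: "\<And>k. admissible (hk k) \<and> (\<forall>t\<in>{-1..1}. hk k (-t) = - hk k t)"
    "\<And>k. Lmap f (hk k) = axis k 1"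
    using LINp_Lmap_basis_preimages[OF lin] by blast
  show ?thesis
  proof (rule interior_Lmap_GG0_eq[OF _ conjunct1[OF hk(1)] hk(2),
        where P=even_part and \<kappa>="1/2" and F="\<lambda>j. even_part (f j)"])
    show "\<forall>j. f j \<in> GG0"
      using lin by (simp add: LINp_def)
    show "even_part (\<lambda>s. g s + h s) = (\<lambda>s. even_part g s + even_part h s)" for g h
      by (simp add: even_part_def fun_eq_iff add_divide_distrib)
    show "even_part (\<lambda>s. c * g s) = (\<lambda>s. c * even_part g s)" for c g
      by (simp add: even_part_def fun_eq_iff algebra_simps)
    show "even_part (ramp a) s = 1 / 2 * ramp a s" if "a \<in> {0..<1}" "s \<in> {0..1}" for a s
      using that by (simp add: even_part_def ramp_def)
    show "g \<in> {g \<in> GG0. LINp (ext_tuple f g)}"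
      if "g \<in> GG0" "\<not> is_lin_comb (\<lambda>j. even_part (f j)) (even_part g)" for g
      using LINp_ext_tuple[OF lin that] that(1) by simp
  qed auto
qed

theorem theorem4p4:
  fixes f :: "'n::finite \<Rightarrow> real \<Rightarrow> real"
  assumes f_G0: "\<forall>j. f j \<in> GG0"
  shows "(LIN f \<longrightarrow>
            convex (interior (Lmap f ` GG0)) \<and> 0 \<in> interior (Lmap f ` GG0) \<and>
            interior (Lmap f ` GG0) =
              interior (Lmap f ` {g \<in> GG0. LIN (ext_tuple f g)}))
       \<and> (LINp f \<longrightarrow>
            convex (interior (Lmap f ` GG00)) \<and> 0 \<in> interior (Lmap f ` GG00) \<and>
            interior (Lmap f ` GG0) =
              interior (Lmap f ` {g \<in> GG0. LINp (ext_tuple f g)}))"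
proof (intro conjI impI)
  have fG: "\<forall>j. f j \<in> GG"
    using f_G0 by (simp add: GG0_def)
  show "convex (interior (Lmap f ` GG0))"
    using fG by (rule convex_interior_Lmap_GG0)
  show "convex (interior (Lmap f ` GG00))"
    using fG by (rule convex_interior_Lmap_GG00)
  show "0 \<in> interior (Lmap f ` GG0)" if "LIN f"
    using that by (rule zero_in_interior_Lmap_GG0)
  show "interior (Lmap f ` GG0) = interior (Lmap f ` {g \<in> GG0. LIN (ext_tuple f g)})" if "LIN f"
    using that by (rule interior_Lmap_GG0_eq_LIN)
  show "0 \<in> interior (Lmap f ` GG00)" if "LINp f"
    using that by (rule zero_in_interior_Lmap_GG00)
  show "interior (Lmap f ` GG0) = interior (Lmap f ` {g \<in> GG0. LINp (ext_tuple f g)})" if "LINp f"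
    using that by (rule interior_Lmap_GG0_eq_LINp)
qed

end
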